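(* Let $L$ be a finite-dimensional Lie algebra over a field $F$. (1) If $S$ is a subalgebra with $\phi(L)\leq S\leq L$, then $\mathrm{nil}(S/\phi(L))=\mathrm{nil}(S)/\phi(L)$, where $\mathrm{nil}(S/\phi(L))$ is taken with respect to the Lie algebra $L/\phi(L)$. (2) If every two-generated proper subalgebra of $L$ is triangulable on $L$, then every two-generated proper subalgebra of $L/\phi(L)$ is triangulable on $L/\phi(L)$.
   Context: The Frattini ideal $\phi(L)$ is the largest ideal of $L$ contained in the intersection of all maximal subalgebras of $L$. For a Lie algebra $L$ and a subalgebra $S$, $\mathrm{nil}(S)$ denotes the unique maximal ideal of $S$ consisting of elements $x$ with $\mathrm{ad}_L x$ nilpotent. A subalgebra $S$ of $L$ is triangulable on $L$ if $\mathrm{ad}_L S$ is a Lie algebra of linear transformations of $L$ simultaneously triangulable over the algebraic closure of $F$ (equivalently, every element of $S^2$ acts nilpotently on $L$). A subalgebra is two-generated if it is generated as a Lie algebra by two elements. *)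

theory Defs
  imports Main
begin

text \<open>Using an explicit carrier lets us form
  quotient algebras (whose elements are cosets, of type 'a set).\<close>

record ('f, 'a) liealg =
  lcarr  :: "'a set"
  ladd   :: "'a \<Rightarrow> 'a \<Rightarrow> 'a"
  lzero  :: 'a
  lsmult :: "'f \<Rightarrow> 'a \<Rightarrow> 'a"
  lbr    :: "'a \<Rightarrow> 'a \<Rightarrow> 'a"

definition lie_algebra :: "('f::field, 'a, 'b) liealg_scheme \<Rightarrow> bool" where
  "lie_algebra L \<longleftrightarrow>
     lzero L \<in> lcarr L \<and>
     (\<forall>x\<in>lcarr L. \<forall>y\<in>lcarr L. ladd L x y \<in> lcarr L) \<and>
     (\<forall>c. \<forall>x\<in>lcarr L. lsmult L c x \<in> lcarr L) \<and>
     (\<forall>x\<in>lcarr L. \<forall>y\<in>lcarr L. lbr L x y \<in> lcarr L) \<and>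
     (\<forall>x\<in>lcarr L. \<forall>y\<in>lcarr L. \<forall>z\<in>lcarr L.
        ladd L (ladd L x y) z = ladd L x (ladd L y z)) \<and>
     (\<forall>x\<in>lcarr L. \<forall>y\<in>lcarr L. ladd L x y = ladd L y x) \<and>
     (\<forall>x\<in>lcarr L. ladd L (lzero L) x = x) \<and>
     (\<forall>x\<in>lcarr L. ladd L x (lsmult L (-1) x) = lzero L) \<and>
     (\<forall>x\<in>lcarr L. lsmult L 1 x = x) \<and>
     (\<forall>a b. \<forall>x\<in>lcarr L. lsmult L a (lsmult L b x) = lsmult L (a * b) x) \<and>
     (\<forall>a b. \<forall>x\<in>lcarr L. lsmult L (a + b) x = ladd L (lsmult L a x) (lsmult L b x)) \<and>
     (\<forall>a. \<forall>x\<in>lcarr L. \<forall>y\<in>lcarr L.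
        lsmult L a (ladd L x y) = ladd L (lsmult L a x) (lsmult L a y)) \<and>
     (\<forall>x\<in>lcarr L. \<forall>y\<in>lcarr L. \<forall>z\<in>lcarr L.
        lbr L (ladd L x y) z = ladd L (lbr L x z) (lbr L y z)) \<and>
     (\<forall>x\<in>lcarr L. \<forall>y\<in>lcarr L. \<forall>z\<in>lcarr L.
        lbr L x (ladd L y z) = ladd L (lbr L x y) (lbr L x z)) \<and>
     (\<forall>a. \<forall>x\<in>lcarr L. \<forall>y\<in>lcarr L.
        lbr L (lsmult L a x) y = lsmult L a (lbr L x y) \<and>
        lbr L x (lsmult L a y) = lsmult L a (lbr L x y)) \<and>
     (\<forall>x\<in>lcarr L. lbr L x x = lzero L) \<and>
     (\<forall>x\<in>lcarr L. \<forall>y\<in>lcarr L. \<forall>z\<in>lcarr L.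
        ladd L (lbr L x (lbr L y z)) (ladd L (lbr L y (lbr L z x)) (lbr L z (lbr L x y)))
          = lzero L)"

fun lincomb :: "('f, 'a, 'b) liealg_scheme \<Rightarrow> ('f \<times> 'a) list \<Rightarrow> 'a" where
  "lincomb L [] = lzero L"
| "lincomb L ((c, v) # xs) = ladd L (lsmult L c v) (lincomb L xs)"

definition lspan :: "('f, 'a, 'b) liealg_scheme \<Rightarrow> 'a set \<Rightarrow> 'a set" where
  "lspan L X = {lincomb L xs | xs. set (map snd xs) \<subseteq> X}"

definition finite_dim :: "('f, 'a, 'b) liealg_scheme \<Rightarrow> bool" where
  "finite_dim L \<longleftrightarrow> (\<exists>B. finite B \<and> B \<subseteq> lcarr L \<and> lspan L B = lcarr L)"

definition lsubspace :: "('f, 'a, 'b) liealg_scheme \<Rightarrow> 'a set \<Rightarrow> bool" where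
  "lsubspace L S \<longleftrightarrow> S \<subseteq> lcarr L \<and> lzero L \<in> S \<and>
     (\<forall>x\<in>S. \<forall>y\<in>S. ladd L x y \<in> S) \<and> (\<forall>c. \<forall>x\<in>S. lsmult L c x \<in> S)"

definition subalgebra :: "('f, 'a, 'b) liealg_scheme \<Rightarrow> 'a set \<Rightarrow> bool" where
  "subalgebra L S \<longleftrightarrow> lsubspace L S \<and> (\<forall>x\<in>S. \<forall>y\<in>S. lbr L x y \<in> S)"

definition ideal_in :: "('f, 'a, 'b) liealg_scheme \<Rightarrow> 'a set \<Rightarrow> 'a set \<Rightarrow> bool" where
  "ideal_in L S J \<longleftrightarrow> lsubspace L J \<and> J \<subseteq> S \<and> (\<forall>s\<in>S. \<forall>j\<in>J. lbr L s j \<in> J)"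

definition lideal :: "('f, 'a, 'b) liealg_scheme \<Rightarrow> 'a set \<Rightarrow> bool" where
  "lideal L I \<longleftrightarrow> ideal_in L (lcarr L) I"

definition maximal_subalgebra :: "('f, 'a, 'b) liealg_scheme \<Rightarrow> 'a set \<Rightarrow> bool" where
  "maximal_subalgebra L M \<longleftrightarrow> subalgebra L M \<and> M \<noteq> lcarr L \<and>
     (\<forall>N. subalgebra L N \<and> M \<subseteq> N \<longrightarrow> N = M \<or> N = lcarr L)"

definition frattini :: "('f, 'a, 'b) liealg_scheme \<Rightarrow> 'a set" where
  "frattini L = (THE I. lideal L I \<and> I \<subseteq> lcarr L \<inter> \<Inter>{M. maximal_subalgebra L M} \<and>
      (\<forall>J. lideal L J \<and> J \<subseteq> lcarr L \<inter> \<Inter>{M. maximal_subalgebra L M} \<longrightarrow> J \<subseteq> I))"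

definition coset :: "('f, 'a, 'b) liealg_scheme \<Rightarrow> 'a set \<Rightarrow> 'a \<Rightarrow> 'a set" where
  "coset L I x = {ladd L x i | i. i \<in> I}"

definition quotient :: "('f, 'a, 'b) liealg_scheme \<Rightarrow> 'a set \<Rightarrow> ('f, 'a set) liealg" where
  "quotient L I =
    \<lparr> lcarr = coset L I ` lcarr L,
      ladd = (\<lambda>P Q. {ladd L p q | p q. p \<in> P \<and> q \<in> Q}),
      lzero = I,
      lsmult = (\<lambda>c P. {ladd L (lsmult L c p) i | p i. p \<in> P \<and> i \<in> I}),
      lbr = (\<lambda>P Q. {ladd L (lbr L p q) i | p q i. p \<in> P \<and> q \<in> Q \<and> i \<in> I}) \<rparr>"

definition qimg :: "('f, 'a, 'b) liealg_scheme \<Rightarrow> 'a set \<Rightarrow> 'a set \<Rightarrow> 'a set set" where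
  "qimg L I S = coset L I ` S"

definition ad_nilpotent :: "('f, 'a, 'b) liealg_scheme \<Rightarrow> 'a \<Rightarrow> bool" where
  "ad_nilpotent L x \<longleftrightarrow> (\<exists>n. \<forall>y\<in>lcarr L. (lbr L x ^^ n) y = lzero L)"

definition nil :: "('f, 'a, 'b) liealg_scheme \<Rightarrow> 'a set \<Rightarrow> 'a set" where
  "nil L S = (THE J. ideal_in L S J \<and> (\<forall>x\<in>J. ad_nilpotent L x) \<and>
      (\<forall>K. ideal_in L S K \<and> (\<forall>x\<in>K. ad_nilpotent L x) \<longrightarrow> K \<subseteq> J))"

definition triangulable :: "('f, 'a, 'b) liealg_scheme \<Rightarrow> 'a set \<Rightarrow> bool" where
  "triangulable L S \<longleftrightarrow>
     (\<forall>x \<in> lspan L {lbr L a b | a b. a \<in> S \<and> b \<in> S}. ad_nilpotent L x)"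

definition generated_subalgebra :: "('f, 'a, 'b) liealg_scheme \<Rightarrow> 'a set \<Rightarrow> 'a set" where
  "generated_subalgebra L X = \<Inter>{T. subalgebra L T \<and> X \<subseteq> T}"

definition two_generated :: "('f, 'a, 'b) liealg_scheme \<Rightarrow> 'a set \<Rightarrow> bool" where
  "two_generated L S \<longleftrightarrow>
     (\<exists>a\<in>lcarr L. \<exists>b\<in>lcarr L. S = generated_subalgebra L {a, b})"

end

theory Submission
  imports Defs "Jordan_Normal_Form.VS_Connect"
begin

text \<open>Everything rests on one property of the Frattini ideal \<open>\<Phi>\<close>: if some power of \<open>ad x\<close> maps
  \<open>L\<close> into \<open>\<Phi>\<close>, then \<open>ad x\<close> is nilpotent. Indeed, by Fitting's lemma \<open>L = L\<^sub>0 + ad(x)\<^sup>m L\<close>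
  for large \<open>m\<close>, where the null component \<open>L\<^sub>0\<close> of \<open>ad x\<close> is a subalgebra and \<open>ad(x)\<^sup>m L \<subseteq> \<Phi>\<close>;
  but a subalgebra supplementing \<open>\<Phi>\<close> is all of \<open>L\<close>, since otherwise it would lie in a maximal
  subalgebra, which contains \<open>\<Phi>\<close>. So \<open>x + \<Phi>\<close> is ad-nilpotent on \<open>L/\<Phi>\<close> exactly when \<open>x\<close> is
  ad-nilpotent on \<open>L\<close>.

  For (1), the ideals of \<open>S/\<Phi>\<close> acting nilpotently are then exactly the images of the ideals of
  \<open>S\<close> acting nilpotently; that a largest such ideal \<open>nil(S)\<close> exists is Engel's theorem, which
  shows that the sum of two of them again acts nilpotently. For (2), a proper subalgebra of
  \<open>L/\<Phi>\<close> generated by \<open>a + \<Phi>\<close> and \<open>b + \<Phi>\<close> lies in the image of the subalgebra \<open>S\<close> generated by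
  \<open>a\<close> and \<open>b\<close>, which is proper as well, and every element of its derived algebra is the image of
  an element of \<open>S\<^sup>2\<close>.\<close>

lemma the_greatest_eq:
  assumes "P F" and "\<And>J. P J \<Longrightarrow> J \<subseteq> F"
  shows "(THE I. P I \<and> (\<forall>J. P J \<longrightarrow> J \<subseteq> I)) = F"
  using assms by (intro the_equality) (auto intro: subset_antisym)

lemma funpow_exit:
  assumes "u \<in> A" "u \<notin> W" "(f ^^ n) u \<in> W" "\<And>v. v \<in> A \<Longrightarrow> f v \<in> A"
  shows "\<exists>v\<in>A. v \<notin> W \<and> f v \<in> W"
  using assms(1-3)
proof (induction n arbitrary: u)
  case (Suc n)
  show ?case
  proof (cases "f u \<in> W")
    case False
    then show ?thesis
      using Suc.IH[of "f u"] Suc.prems assms(4) by (simp add: funpow_Suc_right del: funpow.simps)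
  qed (use Suc.prems in blast)
qed simp

lemma ideal_in_lsubspace: "ideal_in M S J \<Longrightarrow> lsubspace M J"
  and ideal_in_subset: "ideal_in M S J \<Longrightarrow> J \<subseteq> S"
  and ideal_in_lbr: "ideal_in M S J \<Longrightarrow> s \<in> S \<Longrightarrow> x \<in> J \<Longrightarrow> lbr M s x \<in> J"
  unfolding ideal_in_def by auto

locale lie_alg =
  fixes L :: "('f::field, 'a) liealg"
  assumes lie: "lie_algebra L"
begin

abbreviation ladd_L (infixl "+\<^sub>L" 65) where "x +\<^sub>L y \<equiv> ladd L x y"
abbreviation lsmult_L (infixr "\<cdot>\<^sub>L" 75) where "c \<cdot>\<^sub>L x \<equiv> lsmult L c x"
abbreviation lbr_L ("[_, _]\<^sub>L") where "[x, y]\<^sub>L \<equiv> lbr L x y"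
abbreviation lzero_L ("0\<^sub>L") where "0\<^sub>L \<equiv> lzero L"
abbreviation lneg_L ("-\<^sub>L _" [80] 80) where "-\<^sub>L x \<equiv> (-1) \<cdot>\<^sub>L x"
abbreviation ad where "ad x \<equiv> lbr L x"
abbreviation carr where "carr \<equiv> lcarr L"

lemma lzero_closed [simp]: "0\<^sub>L \<in> carr"
  and ladd_closed [simp]: "x \<in> carr \<Longrightarrow> y \<in> carr \<Longrightarrow> x +\<^sub>L y \<in> carr"
  and lsmult_closed [simp]: "x \<in> carr \<Longrightarrow> c \<cdot>\<^sub>L x \<in> carr"
  and lbr_closed [simp]: "x \<in> carr \<Longrightarrow> y \<in> carr \<Longrightarrow> [x, y]\<^sub>L \<in> carr"
  and ladd_assoc: "x \<in> carr \<Longrightarrow> y \<in> carr \<Longrightarrow> z \<in> carr \<Longrightarrow> x +\<^sub>L y +\<^sub>L z = x +\<^sub>L (y +\<^sub>L z)"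
  and ladd_commute: "x \<in> carr \<Longrightarrow> y \<in> carr \<Longrightarrow> x +\<^sub>L y = y +\<^sub>L x"
  and lzero_ladd [simp]: "x \<in> carr \<Longrightarrow> 0\<^sub>L +\<^sub>L x = x"
  and ladd_lneg [simp]: "x \<in> carr \<Longrightarrow> x +\<^sub>L -\<^sub>L x = 0\<^sub>L"
  and lsmult_one [simp]: "x \<in> carr \<Longrightarrow> 1 \<cdot>\<^sub>L x = x"
  and lsmult_lsmult: "x \<in> carr \<Longrightarrow> a \<cdot>\<^sub>L b \<cdot>\<^sub>L x = (a * b) \<cdot>\<^sub>L x"
  and lsmult_add_scalar: "x \<in> carr \<Longrightarrow> (a + b) \<cdot>\<^sub>L x = a \<cdot>\<^sub>L x +\<^sub>L b \<cdot>\<^sub>L x"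
  and lsmult_ladd: "x \<in> carr \<Longrightarrow> y \<in> carr \<Longrightarrow> a \<cdot>\<^sub>L (x +\<^sub>L y) = a \<cdot>\<^sub>L x +\<^sub>L a \<cdot>\<^sub>L y"
  and lbr_ladd_left: "x \<in> carr \<Longrightarrow> y \<in> carr \<Longrightarrow> z \<in> carr \<Longrightarrow> [x +\<^sub>L y, z]\<^sub>L = [x, z]\<^sub>L +\<^sub>L [y, z]\<^sub>L"
  and lbr_ladd_right: "x \<in> carr \<Longrightarrow> y \<in> carr \<Longrightarrow> z \<in> carr \<Longrightarrow> [x, y +\<^sub>L z]\<^sub>L = [x, y]\<^sub>L +\<^sub>L [x, z]\<^sub>L"
  and lbr_lsmult_left: "x \<in> carr \<Longrightarrow> y \<in> carr \<Longrightarrow> [a \<cdot>\<^sub>L x, y]\<^sub>L = a \<cdot>\<^sub>L [x, y]\<^sub>L"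
  and lbr_lsmult_right: "x \<in> carr \<Longrightarrow> y \<in> carr \<Longrightarrow> [x, a \<cdot>\<^sub>L y]\<^sub>L = a \<cdot>\<^sub>L [x, y]\<^sub>L"
  and lbr_self [simp]: "x \<in> carr \<Longrightarrow> [x, x]\<^sub>L = 0\<^sub>L"
  and jacobi: "x \<in> carr \<Longrightarrow> y \<in> carr \<Longrightarrow> z \<in> carr \<Longrightarrow>
     [x, [y, z]\<^sub>L]\<^sub>L +\<^sub>L ([y, [z, x]\<^sub>L]\<^sub>L +\<^sub>L [z, [x, y]\<^sub>L]\<^sub>L) = 0\<^sub>L"
  using lie unfolding lie_algebra_def by - ((elim conjE, simp)+)

lemma ladd_lzero [simp]: "x \<in> carr \<Longrightarrow> x +\<^sub>L 0\<^sub>L = x"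
  using ladd_commute[of x "0\<^sub>L"] by simp

lemma lneg_ladd [simp]: "x \<in> carr \<Longrightarrow> -\<^sub>L x +\<^sub>L x = 0\<^sub>L"
  using ladd_commute[of x "-\<^sub>L x"] by simp

lemma ladd_left_cancel:
  assumes "w \<in> carr" "x \<in> carr" "y \<in> carr" "w +\<^sub>L x = w +\<^sub>L y"
  shows "x = y"
  using assms ladd_assoc[of "-\<^sub>L w" w x] ladd_assoc[of "-\<^sub>L w" w y] by (metis lneg_ladd lsmult_closed lzero_ladd)

lemma lneg_unique: "x \<in> carr \<Longrightarrow> y \<in> carr \<Longrightarrow> x +\<^sub>L y = 0\<^sub>L \<Longrightarrow> y = -\<^sub>L x"
  using ladd_left_cancel[of x y "-\<^sub>L x"] by simp

lemma ladd_lneg_cancel [simp]: "x \<in> carr \<Longrightarrow> y \<in> carr \<Longrightarrow> x +\<^sub>L (-\<^sub>L x +\<^sub>L y) = y"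
  using ladd_assoc[of x "-\<^sub>L x" y] by simp

lemma lsmult_zero_scalar [simp]: "x \<in> carr \<Longrightarrow> 0 \<cdot>\<^sub>L x = 0\<^sub>L"
  using ladd_left_cancel[of "0 \<cdot>\<^sub>L x" "0 \<cdot>\<^sub>L x" "0\<^sub>L"] lsmult_add_scalar[of x 0 0] by simp

lemma lsmult_lzero [simp]: "c \<cdot>\<^sub>L 0\<^sub>L = 0\<^sub>L"
  using ladd_left_cancel[of "c \<cdot>\<^sub>L 0\<^sub>L" "c \<cdot>\<^sub>L 0\<^sub>L" "0\<^sub>L"] lsmult_ladd[of "0\<^sub>L" "0\<^sub>L" c] by simp

lemma lbr_lzero_left [simp]: "x \<in> carr \<Longrightarrow> [0\<^sub>L, x]\<^sub>L = 0\<^sub>L"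
  using lbr_lsmult_left[of "0\<^sub>L" x 0] by simp

lemma lbr_lzero_right [simp]: "x \<in> carr \<Longrightarrow> [x, 0\<^sub>L]\<^sub>L = 0\<^sub>L"
  using lbr_lsmult_right[of x "0\<^sub>L" 0] by simp

lemma lneg_lneg [simp]: "x \<in> carr \<Longrightarrow> -\<^sub>L -\<^sub>L x = x"
  by (simp add: lsmult_lsmult)

lemma lneg_distrib: "x \<in> carr \<Longrightarrow> y \<in> carr \<Longrightarrow> -\<^sub>L (x +\<^sub>L y) = -\<^sub>L x +\<^sub>L -\<^sub>L y"
  by (simp add: lsmult_ladd)

lemma ladd_left_commute: "x \<in> carr \<Longrightarrow> y \<in> carr \<Longrightarrow> z \<in> carr \<Longrightarrow> x +\<^sub>L (y +\<^sub>L z) = y +\<^sub>L (x +\<^sub>L z)"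
  by (metis ladd_assoc ladd_commute)

lemma ladd_swap_middle:
  "a \<in> carr \<Longrightarrow> b \<in> carr \<Longrightarrow> c \<in> carr \<Longrightarrow> d \<in> carr \<Longrightarrow> (a +\<^sub>L b) +\<^sub>L (c +\<^sub>L d) = (a +\<^sub>L c) +\<^sub>L (b +\<^sub>L d)"
  by (simp add: ladd_assoc ladd_left_commute)

lemma lbr_anticomm:
  assumes "x \<in> carr" "y \<in> carr"
  shows "[y, x]\<^sub>L = -\<^sub>L [x, y]\<^sub>L"
proof -
  have "0\<^sub>L = [x +\<^sub>L y, x +\<^sub>L y]\<^sub>L"
    using assms by simp
  also have "\<dots> = ([x, x]\<^sub>L +\<^sub>L [y, x]\<^sub>L) +\<^sub>L ([x, y]\<^sub>L +\<^sub>L [y, y]\<^sub>L)"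
    using assms by (simp del: lbr_self add: lbr_ladd_left lbr_ladd_right)
  also have "\<dots> = [y, x]\<^sub>L +\<^sub>L [x, y]\<^sub>L"
    using assms by simp
  finally show ?thesis
    using assms lneg_unique ladd_commute by (metis lbr_closed)
qed

lemma lbr_derivation:
  assumes "x \<in> carr" "a \<in> carr" "b \<in> carr"
  shows "[x, [a, b]\<^sub>L]\<^sub>L = [[x, a]\<^sub>L, b]\<^sub>L +\<^sub>L [a, [x, b]\<^sub>L]\<^sub>L"
proof -
  have "[a, [b, x]\<^sub>L]\<^sub>L = -\<^sub>L [a, [x, b]\<^sub>L]\<^sub>L" and "[b, [x, a]\<^sub>L]\<^sub>L = -\<^sub>L [[x, a]\<^sub>L, b]\<^sub>L"
    using assms lbr_anticomm[of x b] lbr_anticomm[of "[x, a]\<^sub>L" b] by (simp_all add: lbr_lsmult_right)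
  then have "-\<^sub>L ([[x, a]\<^sub>L, b]\<^sub>L +\<^sub>L [a, [x, b]\<^sub>L]\<^sub>L) = -\<^sub>L [x, [a, b]\<^sub>L]\<^sub>L"
    using jacobi[of x a b] assms lneg_unique by (simp add: lneg_distrib ladd_commute)
  then show ?thesis
    using assms by (metis lneg_lneg ladd_closed lbr_closed)
qed

lemma lsubspace_carr: "lsubspace L carr"
  unfolding lsubspace_def by simp

lemma lsubspace_subset: "lsubspace L U \<Longrightarrow> U \<subseteq> carr"
  and lsubspace_lzero: "lsubspace L U \<Longrightarrow> 0\<^sub>L \<in> U"
  and lsubspace_ladd: "lsubspace L U \<Longrightarrow> x \<in> U \<Longrightarrow> y \<in> U \<Longrightarrow> x +\<^sub>L y \<in> U"
  and lsubspace_lsmult: "lsubspace L U \<Longrightarrow> x \<in> U \<Longrightarrow> c \<cdot>\<^sub>L x \<in> U"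
  unfolding lsubspace_def by auto

lemma subalgebra_lsubspace: "subalgebra L S \<Longrightarrow> lsubspace L S"
  and subalgebra_lbr: "subalgebra L S \<Longrightarrow> x \<in> S \<Longrightarrow> y \<in> S \<Longrightarrow> [x, y]\<^sub>L \<in> S"
  unfolding subalgebra_def by auto

lemma subalgebra_subset: "subalgebra L S \<Longrightarrow> S \<subseteq> carr"
  using subalgebra_lsubspace lsubspace_subset by blast

lemma subalgebra_carr: "subalgebra L carr"
  unfolding subalgebra_def using lsubspace_carr by simp

lemma ideal_in_lbr_right:
  assumes "ideal_in L S J" "subalgebra L S" "s \<in> S" "x \<in> J"
  shows "[x, s]\<^sub>L \<in> J"
proof -
  have "s \<in> carr" "x \<in> carr"
    using assms subalgebra_subset ideal_in_subset by blast+
  then show ?thesis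
    using assms lbr_anticomm[of s x] ideal_in_lbr ideal_in_lsubspace lsubspace_lsmult by metis
qed

lemma subalgebra_ideal_in: "subalgebra L S \<Longrightarrow> ideal_in L S J \<Longrightarrow> subalgebra L J"
  unfolding ideal_in_def subalgebra_def by blast

definition subspace_sum :: "'a set \<Rightarrow> 'a set \<Rightarrow> 'a set" where
  "subspace_sum U W = {u +\<^sub>L w | u w. u \<in> U \<and> w \<in> W}"

lemma subspace_sumI: "u \<in> U \<Longrightarrow> w \<in> W \<Longrightarrow> u +\<^sub>L w \<in> subspace_sum U W"
  unfolding subspace_sum_def by blast

lemma subspace_sumE:
  assumes "x \<in> subspace_sum U W"
  obtains u w where "x = u +\<^sub>L w" "u \<in> U" "w \<in> W"
  using assms unfolding subspace_sum_def by blast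

lemma subspace_sum_left:
  assumes "lsubspace L U" "lsubspace L W"
  shows "U \<subseteq> subspace_sum U W"
proof
  fix u assume "u \<in> U"
  then have "u +\<^sub>L 0\<^sub>L \<in> subspace_sum U W"
    using assms by (simp add: lsubspace_lzero subspace_sumI)
  then show "u \<in> subspace_sum U W"
    using \<open>u \<in> U\<close> assms lsubspace_subset by (metis ladd_lzero subsetD)
qed

lemma subspace_sum_right:
  assumes "lsubspace L U" "lsubspace L W"
  shows "W \<subseteq> subspace_sum U W"
proof
  fix w assume "w \<in> W"
  then have "0\<^sub>L +\<^sub>L w \<in> subspace_sum U W"
    using assms by (simp add: lsubspace_lzero subspace_sumI)
  then show "w \<in> subspace_sum U W"
    using \<open>w \<in> W\<close> assms lsubspace_subset by (metis lzero_ladd subsetD)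
qed

lemma lsubspace_sum:
  assumes U: "lsubspace L U" and W: "lsubspace L W"
  shows "lsubspace L (subspace_sum U W)"
  unfolding lsubspace_def
proof (intro conjI ballI allI)
  have UW: "U \<subseteq> carr" "W \<subseteq> carr"
    using U W lsubspace_subset by auto
  then show "subspace_sum U W \<subseteq> carr"
    by (auto elim!: subspace_sumE simp: subset_iff)
  show "0\<^sub>L \<in> subspace_sum U W"
    using U W subspace_sum_left lsubspace_lzero by blast
  fix x y assume "x \<in> subspace_sum U W" "y \<in> subspace_sum U W"
  then obtain u w u' w' where "x = u +\<^sub>L w" "y = u' +\<^sub>L w'" "u \<in> U" "w \<in> W" "u' \<in> U" "w' \<in> W"
    by (auto elim!: subspace_sumE)
  moreover from this UW have "x +\<^sub>L y = (u +\<^sub>L u') +\<^sub>L (w +\<^sub>L w')"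
    by (simp add: ladd_swap_middle subset_iff)
  ultimately show "x +\<^sub>L y \<in> subspace_sum U W"
    using U W by (simp add: lsubspace_ladd subspace_sumI)
next
  fix c x assume "x \<in> subspace_sum U W"
  then obtain u w where "x = u +\<^sub>L w" "u \<in> U" "w \<in> W"
    by (auto elim!: subspace_sumE)
  moreover from this U W have "c \<cdot>\<^sub>L x = c \<cdot>\<^sub>L u +\<^sub>L c \<cdot>\<^sub>L w"
    by (metis lsmult_ladd lsubspace_subset subsetD)
  ultimately show "c \<cdot>\<^sub>L x \<in> subspace_sum U W"
    using U W by (simp add: lsubspace_lsmult subspace_sumI)
qed

lemma ideal_in_sum:
  assumes I: "ideal_in L S I" and J: "ideal_in L S J" and S: "subalgebra L S"
  shows "ideal_in L S (subspace_sum I J)"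
  unfolding ideal_in_def
proof (intro conjI ballI)
  have sub: "lsubspace L I" "lsubspace L J" "lsubspace L S"
    using I J S ideal_in_lsubspace subalgebra_lsubspace by blast+
  then show "lsubspace L (subspace_sum I J)"
    by (simp add: lsubspace_sum)
  show "subspace_sum I J \<subseteq> S"
    using I J sub by (auto elim!: subspace_sumE dest!: ideal_in_subset intro: lsubspace_ladd)
  fix s x assume "s \<in> S" "x \<in> subspace_sum I J"
  then obtain u w where "x = u +\<^sub>L w" "u \<in> I" "w \<in> J"
    by (auto elim!: subspace_sumE)
  moreover from this \<open>s \<in> S\<close> sub S have "[s, x]\<^sub>L = [s, u]\<^sub>L +\<^sub>L [s, w]\<^sub>L"
    by (auto simp: lbr_ladd_right subset_iff dest!: lsubspace_subset subalgebra_subset)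
  ultimately show "[s, x]\<^sub>L \<in> subspace_sum I J"
    using \<open>s \<in> S\<close> I J by (simp add: ideal_in_lbr subspace_sumI)
qed

lemma ad_pow_closed [simp]: "x \<in> carr \<Longrightarrow> y \<in> carr \<Longrightarrow> (ad x ^^ k) y \<in> carr"
  by (induction k) auto

lemma ad_pow_ladd: "x \<in> carr \<Longrightarrow> a \<in> carr \<Longrightarrow> b \<in> carr \<Longrightarrow>
    (ad x ^^ k) (a +\<^sub>L b) = (ad x ^^ k) a +\<^sub>L (ad x ^^ k) b"
  by (induction k) (auto simp: lbr_ladd_right)

lemma ad_pow_lsmult: "x \<in> carr \<Longrightarrow> a \<in> carr \<Longrightarrow> (ad x ^^ k) (c \<cdot>\<^sub>L a) = c \<cdot>\<^sub>L (ad x ^^ k) a"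
  by (induction k) (auto simp: lbr_lsmult_right)

lemma ad_pow_lzero [simp]: "x \<in> carr \<Longrightarrow> (ad x ^^ k) 0\<^sub>L = 0\<^sub>L"
  by (induction k) auto

lemma ad_pow_Suc_right: "(ad x ^^ Suc k) y = (ad x ^^ k) (ad x y)"
  by (simp add: funpow_Suc_right del: funpow.simps)

lemma ad_pow_eq_zero_mono:
  assumes "x \<in> carr" "(ad x ^^ k) y = 0\<^sub>L" "k \<le> j"
  shows "(ad x ^^ j) y = 0\<^sub>L"
proof -
  obtain d where "j = d + k"
    using assms(3) le_Suc_ex by (metis add.commute)
  then show ?thesis
    using assms by (simp add: funpow_add)
qed

lemma ad_pow_lbr_eq_zero:
  assumes "x \<in> carr" "a \<in> carr" "b \<in> carr" "(ad x ^^ i) a = 0\<^sub>L" "(ad x ^^ j) b = 0\<^sub>L"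
  shows "(ad x ^^ (i + j)) [a, b]\<^sub>L = 0\<^sub>L"
  using assms(2-)
proof (induction "i + j" arbitrary: i j a b)
  case 0
  then show ?case using assms(1) by simp
next
  case (Suc s)
  show ?case
  proof (cases "i = 0 \<or> j = 0")
    case True
    then show ?thesis using Suc.prems assms(1) by auto
  next
    case False
    then obtain i' j' where ij: "i = Suc i'" "j = Suc j'"
      by (metis not0_implies_Suc)
    have s: "s = i' + j" "s = i + j'"
      using Suc.hyps(2) ij by simp_all
    have "(ad x ^^ i') (ad x a) = 0\<^sub>L" "(ad x ^^ j') (ad x b) = 0\<^sub>L"
      using Suc.prems(3,4) ij ad_pow_Suc_right by metis+
    then have "(ad x ^^ s) [ad x a, b]\<^sub>L = 0\<^sub>L" "(ad x ^^ s) [a, ad x b]\<^sub>L = 0\<^sub>L"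
      using Suc.hyps(1)[OF s(1)] Suc.hyps(1)[OF s(2)] Suc.prems assms(1) s by simp_all
    moreover have "(ad x ^^ (i + j)) [a, b]\<^sub>L = (ad x ^^ s) ([ad x a, b]\<^sub>L +\<^sub>L [a, ad x b]\<^sub>L)"
      using Suc.prems assms(1) lbr_derivation ad_pow_Suc_right by (metis Suc.hyps(2))
    ultimately show ?thesis
      using Suc.prems assms(1) by (simp add: ad_pow_ladd)
  qed
qed

definition centralizer_mod :: "'a set \<Rightarrow> 'a set \<Rightarrow> 'a set \<Rightarrow> 'a set" where
  "centralizer_mod J U W = {u \<in> U. \<forall>j\<in>J. [j, u]\<^sub>L \<in> W}"

lemma lsubspace_centralizer_mod:
  assumes "J \<subseteq> carr" "lsubspace L U" "lsubspace L W"
  shows "lsubspace L (centralizer_mod J U W)"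
  using assms unfolding lsubspace_def centralizer_mod_def
  by (auto simp: lbr_ladd_right lbr_lsmult_right subset_iff)

lemma centralizer_mod_invariant:
  assumes "J \<subseteq> carr" "U \<subseteq> carr" "lsubspace L W" "k \<in> carr"
    and "\<And>j. j \<in> J \<Longrightarrow> [j, k]\<^sub>L \<in> J" "\<And>u. u \<in> U \<Longrightarrow> [k, u]\<^sub>L \<in> U" "\<And>w. w \<in> W \<Longrightarrow> [k, w]\<^sub>L \<in> W"
    and "u \<in> centralizer_mod J U W"
  shows "[k, u]\<^sub>L \<in> centralizer_mod J U W"
  unfolding centralizer_mod_def
proof (intro CollectI conjI ballI)
  have u: "u \<in> U" "\<And>j. j \<in> J \<Longrightarrow> [j, u]\<^sub>L \<in> W"
    using assms(8) unfolding centralizer_mod_def by auto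
  then show "[k, u]\<^sub>L \<in> U"
    using assms(6) by blast
  fix j assume "j \<in> J"
  then have "[j, [k, u]\<^sub>L]\<^sub>L = [[j, k]\<^sub>L, u]\<^sub>L +\<^sub>L [k, [j, u]\<^sub>L]\<^sub>L"
    using assms(1,2,4) u(1) by (intro lbr_derivation) auto
  then show "[j, [k, u]\<^sub>L]\<^sub>L \<in> W"
    using \<open>j \<in> J\<close> assms(3,5,7) u(2) lsubspace_ladd by metis
qed

end

section \<open>Rank and chain conditions\<close>

text \<open>The ring fields of the HOL-Algebra module record play no role and are filled with junk.\<close>

definition module_of :: "('f::field, 'a) liealg \<Rightarrow> ('f, 'a) module" where
  "module_of L = \<lparr>carrier = lcarr L, mult = (\<lambda>x y. x), one = lzero L, zero = lzero L,
     add = ladd L, smult = lsmult L\<rparr>"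

context lie_alg
begin

lemma module_of_simps [simp]:
  "carrier (module_of L) = carr" "add (module_of L) = ladd L"
  "zero (module_of L) = 0\<^sub>L" "smult (module_of L) = lsmult L"
  by (simp_all add: module_of_def)

lemma module_module_of: "module (class_ring :: 'f ring) (module_of L)"
proof (rule moduleI)
  show "cring (class_ring :: 'f ring)"
    using class_field unfolding field_def domain_def by blast
  show "abelian_group (module_of L)"
  proof (rule abelian_groupI)
    fix x assume "x \<in> carrier (module_of L)"
    then show "\<exists>y\<in>carrier (module_of L). y \<oplus>\<^bsub>module_of L\<^esub> x = \<zero>\<^bsub>module_of L\<^esub>"
      by (intro bexI[of _ "-\<^sub>L x"]) auto
  qed (auto simp: ladd_assoc ladd_commute ladd_left_commute)
qed (auto simp: lsmult_add_scalar lsmult_ladd lsmult_lsmult)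

lemma vectorspace_module_of: "vectorspace (class_ring :: 'f ring) (module_of L)"
  using module_module_of class_field by (simp add: vectorspace_def)

lemma submodule_lsubspace:
  "lsubspace L U \<Longrightarrow> LinearCombinations.submodule (class_ring :: 'f ring) U (module_of L)"
  unfolding LinearCombinations.submodule_def lsubspace_def using module_module_of by auto

definition lin_indep :: "'a set \<Rightarrow> bool" where
  "lin_indep B \<longleftrightarrow> \<not> module.lin_dep (class_ring :: 'f ring) (module_of L) B"

lemma lin_indep_empty: "lin_indep {}"
  unfolding lin_indep_def module.lin_dep_def[OF module_module_of] by auto

end

locale fin_dim_lie_alg = lie_alg L for L :: "('f::field, 'a) liealg" +
  assumes fin_dim: "finite_dim L"
begin

lemma fin_dim_module_of: "vectorspace.fin_dim (class_ring :: 'f ring) (module_of L)"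
proof -
  obtain B where B: "finite B" "B \<subseteq> carr" "lspan L B = carr"
    using fin_dim unfolding finite_dim_def by blast
  let ?span = "LinearCombinations.module.span (class_ring :: 'f ring) (module_of L) B"
  have sub: "LinearCombinations.submodule (class_ring :: 'f ring) ?span (module_of L)"
    using module.span_is_submodule[OF module_module_of] B by simp
  have "B \<subseteq> ?span"
    using module.in_own_span[OF module_module_of] B by simp
  then have "lincomb L xs \<in> ?span" if "set (map snd xs) \<subseteq> B" for xs
    using that sub by (induction xs) (auto simp: LinearCombinations.submodule_def)
  then have "lspan L B \<subseteq> ?span"
    unfolding lspan_def by auto
  then have "carr \<subseteq> ?span"
    using B(3) by simp
  moreover have "?span \<subseteq> carr"
    using sub unfolding LinearCombinations.submodule_def by simp
  ultimately show ?thesis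
    unfolding vectorspace.fin_dim_def[OF vectorspace_module_of] using B by auto
qed

abbreviation dim_L where "dim_L \<equiv> vectorspace.dim (class_ring :: 'f ring) (module_of L)"

lemma lin_indep_card_le_dim: "B \<subseteq> carr \<Longrightarrow> lin_indep B \<Longrightarrow> finite B \<and> card B \<le> dim_L"
  using vectorspace.li_le_dim[OF vectorspace_module_of fin_dim_module_of, of B]
  unfolding lin_indep_def by simp

definition rank :: "'a set \<Rightarrow> nat" where
  "rank U = (GREATEST n. \<exists>B. B \<subseteq> U \<and> finite B \<and> card B = n \<and> lin_indep B)"

lemma rank_bounded:
  "U \<subseteq> carr \<Longrightarrow> \<exists>B. B \<subseteq> U \<and> finite B \<and> card B = n \<and> lin_indep B \<Longrightarrow> n \<le> dim_L"
  using lin_indep_card_le_dim by blast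

lemma rank_witness:
  assumes "U \<subseteq> carr"
  obtains B where "B \<subseteq> U" "finite B" "card B = rank U" "lin_indep B"
proof -
  have "\<exists>B. B \<subseteq> U \<and> finite B \<and> card B = 0 \<and> lin_indep B"
    using lin_indep_empty by (intro exI[of _ "{}"]) simp
  then have "\<exists>B. B \<subseteq> U \<and> finite B \<and> card B = rank U \<and> lin_indep B"
    unfolding rank_def by (rule GreatestI_nat) (use assms rank_bounded in blast)
  then show ?thesis
    using that by blast
qed

lemma card_le_rank:
  assumes "U \<subseteq> carr" "B \<subseteq> U" "finite B" "lin_indep B"
  shows "card B \<le> rank U"
  unfolding rank_def by (rule Greatest_le_nat) (use assms rank_bounded in blast)+

lemma rank_le_dim: "U \<subseteq> carr \<Longrightarrow> rank U \<le> dim_L"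
  by (metis rank_witness lin_indep_card_le_dim subset_trans)

lemma rank_strict_mono:
  assumes U: "lsubspace L U" and W: "lsubspace L W" and "U \<subset> W"
  shows "rank U < rank W"
proof -
  have UW: "U \<subseteq> carr" "W \<subseteq> carr"
    using U W lsubspace_subset by auto
  obtain B where B: "B \<subseteq> U" "finite B" "card B = rank U" "lin_indep B"
    using rank_witness[OF UW(1)] .
  obtain w where w: "w \<in> W" "w \<notin> U"
    using assms by blast
  have "LinearCombinations.module.span (class_ring :: 'f ring) (module_of L) B \<subseteq> U"
    using module.span_is_subset[OF module_module_of B(1) submodule_lsubspace[OF U]] .
  with w have "w \<notin> LinearCombinations.module.span (class_ring :: 'f ring) (module_of L) B"
    by blast
  moreover have wB: "w \<notin> B"
    using B w by auto
  moreover have "B \<subseteq> carrier (module_of L)" "w \<in> carr"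
    using B UW w by auto
  ultimately have "lin_indep (insert w B)"
    using vectorspace.lin_dep_iff_in_span[OF vectorspace_module_of, of B w] B(4)
    unfolding lin_indep_def by auto
  moreover have "insert w B \<subseteq> W"
    using B assms w by auto
  ultimately have "card (insert w B) \<le> rank W"
    using card_le_rank[OF UW(2)] B(2) by blast
  then show ?thesis
    using B wB by simp
qed

lemma exists_maximal_above:
  assumes "P U0" "\<And>U. P U \<Longrightarrow> lsubspace L U"
  shows "\<exists>M. P M \<and> U0 \<subseteq> M \<and> (\<forall>N. P N \<and> M \<subseteq> N \<longrightarrow> N = M)"
proof -
  let ?R = "\<lambda>r. \<exists>U. P U \<and> U0 \<subseteq> U \<and> rank U = r"
  have bounded: "?R r \<Longrightarrow> r \<le> dim_L" for r
    using rank_le_dim assms(2) lsubspace_subset by blast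
  have "?R (Greatest ?R)"
    by (rule GreatestI_nat[of _ "rank U0"]) (use assms(1) bounded in blast)+
  then obtain M where M: "P M" "U0 \<subseteq> M" "rank M = Greatest ?R"
    by blast
  have "N = M" if "P N" "M \<subseteq> N" for N
  proof (rule ccontr)
    assume "N \<noteq> M"
    then have "rank M < rank N"
      using rank_strict_mono assms(2) M(1) that by blast
    moreover have "rank N \<le> Greatest ?R"
      by (rule Greatest_le_nat[of _ _ dim_L]) (use that M bounded in blast)+
    ultimately show False
      using M by simp
  qed
  then show ?thesis
    using M by blast
qed

lemma decreasing_chain_stabilizes:
  assumes "\<And>k. lsubspace L (U k)" "\<And>k. U (Suc k) \<subseteq> U k"
  obtains k where "U (Suc k) = U k"
proof -
  have "rank (U k) + k \<le> rank (U 0)" if "\<And>k. U (Suc k) \<noteq> U k" for k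
  proof (induction k)
    case (Suc k)
    have "rank (U (Suc k)) < rank (U k)"
      using rank_strict_mono assms that[of k] by blast
    then show ?case
      using Suc by simp
  qed simp
  then show ?thesis
    using that by (metis add_Suc_right not_less_eq_eq le_add2 order_trans)
qed

lemma increasing_chain_stabilizes:
  assumes "\<And>k. lsubspace L (U k)" "\<And>k. U k \<subseteq> U (Suc k)"
  obtains k where "U (Suc k) = U k"
proof -
  have "k \<le> rank (U k)" if "\<And>k. U (Suc k) \<noteq> U k" for k
  proof (induction k)
    case (Suc k)
    have "rank (U k) < rank (U (Suc k))"
      using rank_strict_mono assms that[of k] by blast
    then show ?case
      using Suc by simp
  qed simp
  moreover have "rank (U (Suc dim_L)) \<le> dim_L"
    using rank_le_dim assms(1) lsubspace_subset by blast
  ultimately show ?thesis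
    using that by (meson not_less_eq_eq order_trans)
qed

lemma exists_greatest_subspace:
  assumes "P {0\<^sub>L}" "\<And>U. P U \<Longrightarrow> lsubspace L U"
    and "\<And>U W. P U \<Longrightarrow> P W \<Longrightarrow> P (subspace_sum U W)"
  shows "\<exists>F. P F \<and> (\<forall>J. P J \<longrightarrow> J \<subseteq> F)"
proof -
  obtain F where F: "P F" "\<And>N. P N \<Longrightarrow> F \<subseteq> N \<Longrightarrow> N = F"
    using exists_maximal_above[of P, OF assms(1,2)] by blast
  have "J \<subseteq> F" if "P J" for J
  proof -
    have "P (subspace_sum J F)" "F \<subseteq> subspace_sum J F"
      using assms that F(1) subspace_sum_right by blast+
    then have "subspace_sum J F = F"
      using F(2) by blast
    then show ?thesis
      using subspace_sum_left assms(2) F(1) that by blast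
  qed
  then show ?thesis
    using F(1) by blast
qed

end

section \<open>The Frattini ideal and Fitting's lemma\<close>

context fin_dim_lie_alg
begin

abbreviation Phi ("\<Phi>") where "\<Phi> \<equiv> frattini L"

lemma lideal_frattini_inter_maximal:
  defines "W \<equiv> carr \<inter> \<Inter>{M. maximal_subalgebra L M}"
  shows "lideal L \<Phi> \<and> \<Phi> \<subseteq> W"
proof -
  let ?P = "\<lambda>I. lideal L I \<and> I \<subseteq> W"
  have W_ladd: "x +\<^sub>L y \<in> W" if "x \<in> W" "y \<in> W" for x y
    using that unfolding W_def maximal_subalgebra_def subalgebra_def
    by (auto intro: lsubspace_ladd)
  have "?P {0\<^sub>L}"
    unfolding lideal_def ideal_in_def lsubspace_def W_def maximal_subalgebra_def subalgebra_def
    by (auto intro: lsubspace_lzero)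
  moreover have "?P (subspace_sum I J)" if "?P I" "?P J" for I J
    using that ideal_in_sum[OF _ _ subalgebra_carr] unfolding lideal_def
    by (auto elim!: subspace_sumE intro!: W_ladd)
  moreover have "lsubspace L I" if "?P I" for I
    using that ideal_in_lsubspace unfolding lideal_def by blast
  ultimately obtain F where "?P F" "\<forall>J. ?P J \<longrightarrow> J \<subseteq> F"
    using exists_greatest_subspace[of ?P] by blast
  moreover from this have "\<Phi> = F"
    unfolding frattini_def W_def[symmetric] using the_greatest_eq[of ?P F] by (simp add: conj_assoc)
  ultimately show ?thesis
    by simp
qed

lemma lideal_frattini: "lideal L \<Phi>"
  using lideal_frattini_inter_maximal by blast

lemma frattini_subset_maximal: "maximal_subalgebra L M \<Longrightarrow> \<Phi> \<subseteq> M"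
  using lideal_frattini_inter_maximal by blast

lemma subalgebra_supplement_frattini:
  assumes K: "subalgebra L K" and supp: "carr \<subseteq> subspace_sum K \<Phi>"
  shows "K = carr"
proof (rule ccontr)
  let ?P = "\<lambda>N. subalgebra L N \<and> N \<noteq> carr"
  assume "K \<noteq> carr"
  then have "?P K" "\<And>N. ?P N \<Longrightarrow> lsubspace L N"
    using K subalgebra_lsubspace by auto
  then obtain M where M: "subalgebra L M" "M \<noteq> carr" "K \<subseteq> M"
      and max: "\<forall>N. ?P N \<and> M \<subseteq> N \<longrightarrow> N = M"
    using exists_maximal_above[of ?P K] by blast
  then have "maximal_subalgebra L M"
    unfolding maximal_subalgebra_def by blast
  then have "subspace_sum K \<Phi> \<subseteq> M"
    using M frattini_subset_maximal subalgebra_lsubspace lsubspace_ladd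
    by (fastforce elim!: subspace_sumE)
  then show False
    using M supp subalgebra_subset by blast
qed

lemma lsubspace_ad_pow_image:
  assumes x: "x \<in> carr"
  shows "lsubspace L ((ad x ^^ k) ` carr)"
  unfolding lsubspace_def
proof (intro conjI ballI allI)
  show "(ad x ^^ k) ` carr \<subseteq> carr" "0\<^sub>L \<in> (ad x ^^ k) ` carr"
    using x by (auto intro: image_eqI[of _ _ "0\<^sub>L"])
  fix a b assume "a \<in> (ad x ^^ k) ` carr" "b \<in> (ad x ^^ k) ` carr"
  then show "a +\<^sub>L b \<in> (ad x ^^ k) ` carr"
    using x by (auto simp: ad_pow_ladd[symmetric])
next
  fix c a assume "a \<in> (ad x ^^ k) ` carr"
  then show "c \<cdot>\<^sub>L a \<in> (ad x ^^ k) ` carr"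
    using x by (auto simp: ad_pow_lsmult[symmetric])
qed

lemma lsubspace_ad_pow_kernel: "x \<in> carr \<Longrightarrow> lsubspace L {y \<in> carr. (ad x ^^ k) y = 0\<^sub>L}"
  unfolding lsubspace_def by (auto simp: ad_pow_ladd ad_pow_lsmult)

lemma ad_pow_image_stabilizes:
  assumes x: "x \<in> carr"
  obtains m where "n \<le> m" "(ad x ^^ (m + m)) ` carr = (ad x ^^ m) ` carr"
proof -
  let ?Im = "\<lambda>k. (ad x ^^ k) ` carr"
  have Im_Suc: "?Im (Suc k) = ad x ` ?Im k" for k
    by (simp add: image_image)
  have "?Im (Suc k) \<subseteq> ?Im k" for k
    using x by (auto simp: ad_pow_Suc_right simp del: funpow.simps)
  then obtain k0 where k0: "?Im (Suc k0) = ?Im k0"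
    using decreasing_chain_stabilizes[of ?Im] lsubspace_ad_pow_image x by blast
  have stable: "?Im (k0 + j) = ?Im k0" for j
    by (induction j) (use Im_Suc k0 in auto)
  show ?thesis
    using that[of "k0 + n"] stable[of n] stable[of "n + (k0 + n)"] by (simp add: ac_simps)
qed

definition fitting_null_component :: "'a \<Rightarrow> 'a set" where
  "fitting_null_component x = {y \<in> carr. \<exists>k. (ad x ^^ k) y = 0\<^sub>L}"

lemma subalgebra_fitting_null_component:
  assumes x: "x \<in> carr"
  shows "subalgebra L (fitting_null_component x)"
  unfolding subalgebra_def lsubspace_def fitting_null_component_def
proof (intro conjI ballI allI)
  fix a b assume "a \<in> {y \<in> carr. \<exists>k. (ad x ^^ k) y = 0\<^sub>L}" "b \<in> {y \<in> carr. \<exists>k. (ad x ^^ k) y = 0\<^sub>L}"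
  then obtain i j where ij: "a \<in> carr" "b \<in> carr" "(ad x ^^ i) a = 0\<^sub>L" "(ad x ^^ j) b = 0\<^sub>L"
    by blast
  then have "(ad x ^^ (i + j)) a = 0\<^sub>L" "(ad x ^^ (i + j)) b = 0\<^sub>L"
    using ad_pow_eq_zero_mono[OF x] by simp_all
  with ij x show "a +\<^sub>L b \<in> {y \<in> carr. \<exists>k. (ad x ^^ k) y = 0\<^sub>L}"
    by (auto simp: ad_pow_ladd intro!: exI[of _ "i + j"])
  show "[a, b]\<^sub>L \<in> {y \<in> carr. \<exists>k. (ad x ^^ k) y = 0\<^sub>L}"
    using ad_pow_lbr_eq_zero[OF x ij] ij by auto
next
  fix c a assume "a \<in> {y \<in> carr. \<exists>k. (ad x ^^ k) y = 0\<^sub>L}"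
  then obtain k where "a \<in> carr" "(ad x ^^ k) a = 0\<^sub>L"
    by blast
  with x show "c \<cdot>\<^sub>L a \<in> {y \<in> carr. \<exists>k. (ad x ^^ k) y = 0\<^sub>L}"
    by (auto simp: ad_pow_lsmult intro!: exI[of _ k])
qed (use x in auto)

lemma fitting_decomposition:
  assumes x: "x \<in> carr" and m: "(ad x ^^ (m + m)) ` carr = (ad x ^^ m) ` carr"
  shows "carr \<subseteq> subspace_sum (fitting_null_component x) ((ad x ^^ m) ` carr)"
proof
  fix y assume y: "y \<in> carr"
  then obtain z where z: "z \<in> carr" "(ad x ^^ m) y = (ad x ^^ (m + m)) z"
    using m by (metis image_eqI imageE)
  define w where "w = (ad x ^^ m) z"
  have w: "w \<in> carr" "(ad x ^^ m) w = (ad x ^^ m) y"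
    using x z by (simp_all add: w_def funpow_add)
  have "(ad x ^^ m) (y +\<^sub>L -\<^sub>L w) = 0\<^sub>L"
    using x y w by (simp add: ad_pow_ladd ad_pow_lsmult)
  then have "y +\<^sub>L -\<^sub>L w \<in> fitting_null_component x"
    unfolding fitting_null_component_def using y w by auto
  moreover have "y = (y +\<^sub>L -\<^sub>L w) +\<^sub>L w"
    using y w by (simp add: ladd_assoc)
  moreover have "w \<in> (ad x ^^ m) ` carr"
    using z unfolding w_def by blast
  ultimately show "y \<in> subspace_sum (fitting_null_component x) ((ad x ^^ m) ` carr)"
    by (metis subspace_sumI)
qed

lemma ad_nilpotentI_pointwise:
  assumes x: "x \<in> carr" and pointwise: "\<And>y. y \<in> carr \<Longrightarrow> \<exists>k. (ad x ^^ k) y = 0\<^sub>L"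
  shows "ad_nilpotent L x"
proof -
  let ?Ker = "\<lambda>k. {y \<in> carr. (ad x ^^ k) y = 0\<^sub>L}"
  have "?Ker k \<subseteq> ?Ker (Suc k)" for k
    using ad_pow_eq_zero_mono[OF x] x by auto
  then obtain k1 where k1: "?Ker (Suc k1) = ?Ker k1"
    using increasing_chain_stabilizes[of ?Ker] lsubspace_ad_pow_kernel x by blast
  have stable: "?Ker (k1 + j) = ?Ker k1" for j
  proof (induction j)
    case (Suc j)
    have "y \<in> ?Ker k1" if "y \<in> ?Ker (k1 + Suc j)" for y
    proof -
      have "ad x y \<in> ?Ker (k1 + j)"
        using that x by (simp add: ad_pow_Suc_right del: funpow.simps)
      then have "ad x y \<in> ?Ker k1"
        using Suc by simp
      then have "y \<in> ?Ker (Suc k1)"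
        using that by (simp add: ad_pow_Suc_right del: funpow.simps)
      then show ?thesis
        by (metis k1)
    qed
    then show ?case
      using Suc ad_pow_eq_zero_mono[OF x, of k1 _ "k1 + Suc j"] by auto
  qed simp
  have "(ad x ^^ k1) y = 0\<^sub>L" if y: "y \<in> carr" for y
  proof -
    obtain k where "(ad x ^^ k) y = 0\<^sub>L"
      using pointwise y by blast
    then have "y \<in> ?Ker (k1 + k)"
      using ad_pow_eq_zero_mono[OF x] y by auto
    then show ?thesis
      using stable by simp
  qed
  then show ?thesis
    unfolding ad_nilpotent_def by blast
qed

lemma ad_nilpotent_if_ad_pow_into_frattini:
  assumes x: "x \<in> carr" and n: "\<And>y. y \<in> carr \<Longrightarrow> (ad x ^^ n) y \<in> \<Phi>"
  shows "ad_nilpotent L x"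
proof -
  obtain m where m: "n \<le> m" "(ad x ^^ (m + m)) ` carr = (ad x ^^ m) ` carr"
    using ad_pow_image_stabilizes[OF x] .
  have "(ad x ^^ m) ` carr \<subseteq> \<Phi>"
  proof
    fix w assume "w \<in> (ad x ^^ m) ` carr"
    then obtain y where "y \<in> carr" "w = (ad x ^^ n) ((ad x ^^ (m - n)) y)"
      using m(1) by (metis funpow_add imageE le_add_diff_inverse comp_apply)
    then show "w \<in> \<Phi>"
      using n x by simp
  qed
  then have "carr \<subseteq> subspace_sum (fitting_null_component x) \<Phi>"
    using fitting_decomposition[OF x m(2)] unfolding subspace_sum_def by blast
  then have "fitting_null_component x = carr"
    by (rule subalgebra_supplement_frattini[OF subalgebra_fitting_null_component[OF x]])
  then show ?thesis
    using ad_nilpotentI_pointwise[OF x] unfolding fitting_null_component_def by blast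
qed

end

section \<open>Engel's theorem and the largest nilpotently acting ideal\<close>

context lie_alg
begin

definition adjoin :: "'a set \<Rightarrow> 'a \<Rightarrow> 'a set" where
  "adjoin H y = {h +\<^sub>L c \<cdot>\<^sub>L y | h c. h \<in> H}"

lemma adjoin_superset: "H \<subseteq> carr \<Longrightarrow> y \<in> carr \<Longrightarrow> H \<subseteq> adjoin H y"
  unfolding adjoin_def by (force intro!: exI[of _ 0])

lemma adjoin_generator: "lsubspace L H \<Longrightarrow> y \<in> carr \<Longrightarrow> y \<in> adjoin H y"
  unfolding adjoin_def by (force intro!: exI[of _ "0\<^sub>L"] exI[of _ 1] lsubspace_lzero)

lemma adjoin_subset: "lsubspace L J \<Longrightarrow> H \<subseteq> J \<Longrightarrow> y \<in> J \<Longrightarrow> adjoin H y \<subseteq> J"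
  unfolding adjoin_def by (auto intro!: lsubspace_ladd lsubspace_lsmult)

lemma subalgebra_adjoin:
  assumes H: "subalgebra L H" and y: "y \<in> carr" and normal: "\<And>h. h \<in> H \<Longrightarrow> [h, y]\<^sub>L \<in> H"
  shows "subalgebra L (adjoin H y)"
  unfolding subalgebra_def lsubspace_def
proof (intro conjI ballI allI)
  have Hs: "lsubspace L H" and HC: "H \<subseteq> carr"
    using H subalgebra_lsubspace subalgebra_subset by auto
  show "adjoin H y \<subseteq> carr"
    using HC y unfolding adjoin_def by auto
  show "0\<^sub>L \<in> adjoin H y"
    using adjoin_superset HC y Hs lsubspace_lzero by blast
  fix a b assume "a \<in> adjoin H y" "b \<in> adjoin H y"
  then obtain h c h' c' where ab: "a = h +\<^sub>L c \<cdot>\<^sub>L y" "b = h' +\<^sub>L c' \<cdot>\<^sub>L y" "h \<in> H" "h' \<in> H"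
    unfolding adjoin_def by blast
  then have hC: "h \<in> carr" "h' \<in> carr"
    using HC by auto
  have "a +\<^sub>L b = (h +\<^sub>L h') +\<^sub>L (c + c') \<cdot>\<^sub>L y"
    using ab hC y by (simp add: ladd_swap_middle lsmult_add_scalar)
  then show "a +\<^sub>L b \<in> adjoin H y"
    using ab Hs lsubspace_ladd unfolding adjoin_def by blast
  have "[a, b]\<^sub>L = ([h, h']\<^sub>L +\<^sub>L c \<cdot>\<^sub>L -\<^sub>L [h', y]\<^sub>L +\<^sub>L c' \<cdot>\<^sub>L [h, y]\<^sub>L) +\<^sub>L 0 \<cdot>\<^sub>L y"
    using ab hC y lbr_anticomm[of h' y]
    by (simp add: lbr_ladd_left lbr_ladd_right lbr_lsmult_left lbr_lsmult_right ladd_assoc)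
  moreover have "[h, h']\<^sub>L +\<^sub>L c \<cdot>\<^sub>L -\<^sub>L [h', y]\<^sub>L +\<^sub>L c' \<cdot>\<^sub>L [h, y]\<^sub>L \<in> H"
    using ab H normal Hs subalgebra_lbr by (intro lsubspace_ladd lsubspace_lsmult) auto
  ultimately show "[a, b]\<^sub>L \<in> adjoin H y"
    unfolding adjoin_def by blast
next
  fix d a assume "a \<in> adjoin H y"
  then obtain h c where "a = h +\<^sub>L c \<cdot>\<^sub>L y" "h \<in> H"
    unfolding adjoin_def by blast
  moreover from this have "d \<cdot>\<^sub>L a = d \<cdot>\<^sub>L h +\<^sub>L (d * c) \<cdot>\<^sub>L y"
    using H y subalgebra_subset[OF H] by (auto simp: lsmult_ladd lsmult_lsmult subset_iff)
  ultimately show "d \<cdot>\<^sub>L a \<in> adjoin H y"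
    using H subalgebra_lsubspace lsubspace_lsmult unfolding adjoin_def by blast
qed

lemma adjoin_eq_if_maximal:
  assumes J: "subalgebra L J" and H: "subalgebra L H" "H \<subseteq> J" and y: "y \<in> J" "y \<notin> H"
    and normal: "\<And>h. h \<in> H \<Longrightarrow> [h, y]\<^sub>L \<in> H"
    and H_max: "\<forall>N. subalgebra L N \<and> N \<subseteq> J \<and> N \<noteq> J \<and> H \<subseteq> N \<longrightarrow> N = H"
  shows "adjoin H y = J"
proof -
  have yC: "y \<in> carr"
    using J y subalgebra_subset by blast
  have "subalgebra L (adjoin H y)" "adjoin H y \<subseteq> J" "H \<subseteq> adjoin H y" "y \<in> adjoin H y"
    using subalgebra_adjoin[OF H(1) yC normal] adjoin_subset[of J H y] adjoin_superset[of H y]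
      adjoin_generator[of H y] J H y yC subalgebra_lsubspace subalgebra_subset by auto
  then show ?thesis
    using H_max y(2) by blast
qed

lemma lbr_adjoin_mem:
  assumes "H \<subseteq> carr" "y \<in> carr" "u \<in> carr" "lsubspace L W"
    and "\<And>h. h \<in> H \<Longrightarrow> [h, u]\<^sub>L \<in> W" "[y, u]\<^sub>L \<in> W" "x \<in> adjoin H y"
  shows "[x, u]\<^sub>L \<in> W"
proof -
  obtain h c where hc: "h \<in> H" "x = h +\<^sub>L c \<cdot>\<^sub>L y"
    using assms(7) unfolding adjoin_def by blast
  then have "[x, u]\<^sub>L = [h, u]\<^sub>L +\<^sub>L c \<cdot>\<^sub>L [y, u]\<^sub>L"
    using assms(1-3) by (auto simp: lbr_ladd_left lbr_lsmult_left)
  then show ?thesis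
    using hc assms(4-6) lsubspace_ladd lsubspace_lsmult by auto
qed

lemma adjoin_common_vector:
  assumes "H \<subseteq> carr" "y \<in> carr" "U \<subseteq> carr" "lsubspace L W"
    and normal: "\<And>h. h \<in> H \<Longrightarrow> [h, y]\<^sub>L \<in> H"
    and y_inv: "\<And>u. u \<in> U \<Longrightarrow> [y, u]\<^sub>L \<in> U" "\<And>w. w \<in> W \<Longrightarrow> [y, w]\<^sub>L \<in> W"
    and y_nil: "\<exists>n. \<forall>u\<in>U. (ad y ^^ n) u \<in> W"
    and u1: "u1 \<in> U" "u1 \<notin> W" "\<And>h. h \<in> H \<Longrightarrow> [h, u1]\<^sub>L \<in> W"
  shows "\<exists>u\<in>U. u \<notin> W \<and> (\<forall>x\<in>adjoin H y. [x, u]\<^sub>L \<in> W)"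
proof -
  let ?U0 = "centralizer_mod H U W"
  have "u1 \<in> ?U0"
    using u1 unfolding centralizer_mod_def by blast
  moreover obtain n where "(ad y ^^ n) u1 \<in> W"
    using y_nil u1(1) by blast
  moreover have "[y, u]\<^sub>L \<in> ?U0" if "u \<in> ?U0" for u
    by (rule centralizer_mod_invariant) (use that assms in auto)
  ultimately obtain u where u: "u \<in> ?U0" "u \<notin> W" "[y, u]\<^sub>L \<in> W"
    using funpow_exit[of u1 ?U0 W n "ad y"] u1(2) by blast
  have "[x, u]\<^sub>L \<in> W" if "x \<in> adjoin H y" for x
    by (rule lbr_adjoin_mem[of H y u W]) (use that u assms in \<open>auto simp: centralizer_mod_def\<close>)
  then show ?thesis
    using u unfolding centralizer_mod_def by blast
qed

end

context fin_dim_lie_alg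
begin

text \<open>Engel's theorem for the action of a subalgebra \<open>J\<close> on a quotient \<open>U/W\<close>, by induction on
  the rank of \<open>J\<close>: a maximal proper subalgebra \<open>H\<close> of \<open>J\<close> has a normalising element \<open>y\<close>
  with \<open>J = H + Fy\<close>, and \<open>ad y\<close> has a fixed vector modulo \<open>W\<close> in the space of vectors that \<open>H\<close>
  maps into \<open>W\<close>.\<close>

lemma engel_vector:
  assumes "subalgebra L J" "\<And>x. x \<in> J \<Longrightarrow> \<exists>n. \<forall>y\<in>J. (ad x ^^ n) y = 0\<^sub>L"
    and "lsubspace L U" "lsubspace L W" "W \<subset> U"
    and "\<And>x u. x \<in> J \<Longrightarrow> u \<in> U \<Longrightarrow> [x, u]\<^sub>L \<in> U" "\<And>x w. x \<in> J \<Longrightarrow> w \<in> W \<Longrightarrow> [x, w]\<^sub>L \<in> W"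
    and "\<And>x. x \<in> J \<Longrightarrow> \<exists>n. \<forall>u\<in>U. (ad x ^^ n) u \<in> W"
  shows "\<exists>u\<in>U. u \<notin> W \<and> (\<forall>x\<in>J. [x, u]\<^sub>L \<in> W)"
  using assms
proof (induction "rank J" arbitrary: J U W rule: less_induct)
  case less
  note J = less.prems(1) and J_nil = less.prems(2) and U = less.prems(3) and W = less.prems(4)
  have JC: "J \<subseteq> carr" and UC: "U \<subseteq> carr"
    using J U subalgebra_subset lsubspace_subset by auto
  show ?case
  proof (cases "J \<subseteq> {0\<^sub>L}")
    case True
    then show ?thesis
      using less.prems(5) UC W lsubspace_lzero by (force simp: subset_iff)
  next
    case False
    let ?P = "\<lambda>H. subalgebra L H \<and> H \<subseteq> J \<and> H \<noteq> J"
    have "?P {0\<^sub>L}"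
      using False J subalgebra_lsubspace lsubspace_lzero
      unfolding subalgebra_def lsubspace_def by auto
    then obtain H where H: "subalgebra L H" "H \<subset> J" and H_max: "\<forall>N. ?P N \<and> H \<subseteq> N \<longrightarrow> N = H"
      using exists_maximal_above[of ?P "{0\<^sub>L}"] subalgebra_lsubspace by blast
    have rank_H: "rank H < rank J"
      using rank_strict_mono H J subalgebra_lsubspace by blast
    have H_nil: "\<And>x. x \<in> H \<Longrightarrow> \<exists>n. \<forall>y\<in>H. (ad x ^^ n) y = 0\<^sub>L"
      using J_nil H by blast
    have "\<exists>y\<in>J. y \<notin> H \<and> (\<forall>h\<in>H. [h, y]\<^sub>L \<in> H)"
    proof (rule less.hyps[OF rank_H H(1) H_nil])
      show "\<And>x. x \<in> H \<Longrightarrow> \<exists>n. \<forall>u\<in>J. (ad x ^^ n) u \<in> H"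
        using J_nil H subalgebra_lsubspace lsubspace_lzero by (metis psubsetD)
    qed (use J H subalgebra_lsubspace subalgebra_lbr in auto)
    then obtain y where y: "y \<in> J" "y \<notin> H" and normal: "\<And>h. h \<in> H \<Longrightarrow> [h, y]\<^sub>L \<in> H"
      by blast
    have yC: "y \<in> carr"
      using y JC by blast
    have J_adjoin: "adjoin H y = J"
      using adjoin_eq_if_maximal[OF J H(1) _ y normal] H H_max by blast
    have "\<exists>u\<in>U. u \<notin> W \<and> (\<forall>x\<in>H. [x, u]\<^sub>L \<in> W)"
      by (rule less.hyps[OF rank_H H(1) H_nil U W]) (use less.prems H in auto)
    then obtain u1 where "u1 \<in> U" "u1 \<notin> W" "\<And>h. h \<in> H \<Longrightarrow> [h, u1]\<^sub>L \<in> W"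
      by blast
    then have "\<exists>u\<in>U. u \<notin> W \<and> (\<forall>x\<in>adjoin H y. [x, u]\<^sub>L \<in> W)"
      by (intro adjoin_common_vector[of H y U W u1]) (use H JC UC W yC normal less.prems(6-8) y in auto)
    then show ?thesis
      using J_adjoin by simp
  qed
qed

end

lemma nil_eqI:
  assumes "ideal_in M S N" "\<forall>x\<in>N. ad_nilpotent M x"
    and "\<And>K. ideal_in M S K \<Longrightarrow> \<forall>x\<in>K. ad_nilpotent M x \<Longrightarrow> K \<subseteq> N"
  shows "nil M S = N"
  unfolding nil_def
  using the_greatest_eq[of "\<lambda>K. ideal_in M S K \<and> (\<forall>x\<in>K. ad_nilpotent M x)" N] assms
  by (simp add: conj_assoc)

context lie_alg
begin

primrec upper_series :: "'a set \<Rightarrow> nat \<Rightarrow> 'a set" where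
  "upper_series I 0 = {0\<^sub>L}"
| "upper_series I (Suc k) = centralizer_mod I carr (upper_series I k)"

lemma upper_series_invariant:
  assumes S: "subalgebra L S" and I: "ideal_in L S I"
  shows "lsubspace L (upper_series I k) \<and> (\<forall>s\<in>S. \<forall>u\<in>upper_series I k. [s, u]\<^sub>L \<in> upper_series I k)"
proof (induction k)
  case 0
  then show ?case
    using subalgebra_subset[OF S] unfolding lsubspace_def by (auto simp: subset_iff)
next
  case (Suc k)
  have "I \<subseteq> carr"
    using I S ideal_in_subset subalgebra_subset by blast
  then show ?case
    using Suc S I centralizer_mod_invariant[of I carr "upper_series I k"] lsubspace_carr
      lsubspace_centralizer_mod subalgebra_subset ideal_in_lbr_right
    by (simp add: subset_iff)
qed

lemma upper_series_mono: "I \<subseteq> carr \<Longrightarrow> upper_series I k \<subseteq> upper_series I (Suc k)"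
  by (induction k) (auto simp: centralizer_mod_def subset_iff)

lemma ad_pow_upper_series: "x \<in> I \<Longrightarrow> y \<in> upper_series I k \<Longrightarrow> (ad x ^^ k) y = 0\<^sub>L"
  by (induction k arbitrary: y) (auto simp: centralizer_mod_def ad_pow_Suc_right simp del: funpow.simps)

end

context fin_dim_lie_alg
begin

lemma nil_ideals_have_common_vector:
  assumes S: "subalgebra L S" and J: "ideal_in L S J" and K: "ideal_in L S K"
    and nJ: "\<forall>x\<in>J. ad_nilpotent L x" and nK: "\<forall>x\<in>K. ad_nilpotent L x"
    and W: "lsubspace L W" "W \<noteq> carr" and W_inv: "\<And>s w. s \<in> S \<Longrightarrow> w \<in> W \<Longrightarrow> [s, w]\<^sub>L \<in> W"
  shows "\<exists>u\<in>carr. u \<notin> W \<and> (\<forall>x\<in>subspace_sum J K. [x, u]\<^sub>L \<in> W)"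
proof -
  have JK: "J \<subseteq> S" "K \<subseteq> S" "J \<subseteq> carr" "K \<subseteq> carr"
    using J K S ideal_in_subset subalgebra_subset by blast+
  have WC: "W \<subset> carr"
    using W lsubspace_subset by blast
  have nil_on: "\<exists>n. \<forall>u\<in>U. (ad x ^^ n) u = 0\<^sub>L" if "U \<subseteq> carr" "ad_nilpotent L x" for U x
    using that unfolding ad_nilpotent_def by blast
  have nil_mod: "\<exists>n. \<forall>u\<in>U. (ad x ^^ n) u \<in> W" if "U \<subseteq> carr" "ad_nilpotent L x" for U x
    using nil_on[OF that] W lsubspace_lzero by metis
  have "\<exists>u\<in>carr. u \<notin> W \<and> (\<forall>x\<in>J. [x, u]\<^sub>L \<in> W)"
    by (rule engel_vector[OF subalgebra_ideal_in[OF S J] _ lsubspace_carr W(1) WC])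
      (use nJ nil_on nil_mod JK W_inv in \<open>auto simp: subset_iff\<close>)
  then have U1: "W \<subset> centralizer_mod J carr W"
    using JK W_inv WC unfolding centralizer_mod_def by auto
  have U1_inv: "[k, u]\<^sub>L \<in> centralizer_mod J carr W" if "k \<in> K" "u \<in> centralizer_mod J carr W" for k u
    by (rule centralizer_mod_invariant)
      (use that JK W_inv W ideal_in_lbr_right[OF J S] in \<open>auto simp: subset_iff\<close>)
  have U1C: "centralizer_mod J carr W \<subseteq> carr"
    unfolding centralizer_mod_def by blast
  have "\<exists>u\<in>centralizer_mod J carr W. u \<notin> W \<and> (\<forall>x\<in>K. [x, u]\<^sub>L \<in> W)"
    by (rule engel_vector[OF subalgebra_ideal_in[OF S K] _
          lsubspace_centralizer_mod[OF JK(3) lsubspace_carr W(1)] W(1) U1 U1_inv])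
      (use nK nil_on nil_mod JK W_inv U1C in \<open>auto simp: subset_iff\<close>)
  then obtain u where u: "u \<in> carr" "u \<notin> W" "\<And>j. j \<in> J \<Longrightarrow> [j, u]\<^sub>L \<in> W" "\<And>k. k \<in> K \<Longrightarrow> [k, u]\<^sub>L \<in> W"
    unfolding centralizer_mod_def by blast
  have "[x, u]\<^sub>L \<in> W" if "x \<in> subspace_sum J K" for x
    using that
  proof (rule subspace_sumE)
    fix j k assume "x = j +\<^sub>L k" "j \<in> J" "k \<in> K"
    then show ?thesis
      using u JK W lsubspace_ladd by (auto simp: lbr_ladd_left subset_iff)
  qed
  then show ?thesis
    using u by blast
qed

lemma ad_nilpotent_subspace_sum:
  assumes S: "subalgebra L S" and J: "ideal_in L S J" and K: "ideal_in L S K"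
    and nJ: "\<forall>x\<in>J. ad_nilpotent L x" and nK: "\<forall>x\<in>K. ad_nilpotent L x"
    and x: "x \<in> subspace_sum J K"
  shows "ad_nilpotent L x"
proof -
  let ?I = "subspace_sum J K"
  have I: "ideal_in L S ?I"
    using ideal_in_sum[OF J K S] .
  then have IC: "?I \<subseteq> carr"
    using S ideal_in_subset subalgebra_subset by blast
  obtain k where k: "upper_series ?I (Suc k) = upper_series ?I k"
    using increasing_chain_stabilizes[of "upper_series ?I"]
      upper_series_invariant[OF S I] upper_series_mono[OF IC] by blast
  have "upper_series ?I k = carr"
  proof (rule ccontr)
    assume "upper_series ?I k \<noteq> carr"
    then obtain u where "u \<in> carr" "u \<notin> upper_series ?I k" "\<forall>x\<in>?I. [x, u]\<^sub>L \<in> upper_series ?I k"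
      using nil_ideals_have_common_vector[OF S J K nJ nK] upper_series_invariant[OF S I] by blast
    then show False
      using k by (auto simp: centralizer_mod_def)
  qed
  then show ?thesis
    using ad_pow_upper_series[OF x] unfolding ad_nilpotent_def by blast
qed

lemma nil_characterization:
  assumes S: "subalgebra L S"
  shows "ideal_in L S (nil L S)" "\<forall>x\<in>nil L S. ad_nilpotent L x"
    and "\<And>K. ideal_in L S K \<Longrightarrow> \<forall>x\<in>K. ad_nilpotent L x \<Longrightarrow> K \<subseteq> nil L S"
proof -
  let ?P = "\<lambda>K. ideal_in L S K \<and> (\<forall>x\<in>K. ad_nilpotent L x)"
  have zero: "?P {0\<^sub>L}"
    using S subalgebra_lsubspace lsubspace_lzero subalgebra_subset[OF S]
    unfolding ideal_in_def lsubspace_def ad_nilpotent_def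
    by (auto simp: subset_iff intro: exI[of _ 1])
  have sum: "?P (subspace_sum J K)" if "?P J" "?P K" for J K
    using that ideal_in_sum S ad_nilpotent_subspace_sum by blast
  have "lsubspace L K" if "?P K" for K
    using that ideal_in_lsubspace by blast
  then obtain N where N: "ideal_in L S N" "\<forall>x\<in>N. ad_nilpotent L x"
      and N_max: "\<forall>K. ?P K \<longrightarrow> K \<subseteq> N"
    using exists_greatest_subspace[of ?P, OF zero _ sum] by blast
  moreover have "nil L S = N"
    using nil_eqI[OF N] N_max by blast
  ultimately show "ideal_in L S (nil L S)" "\<forall>x\<in>nil L S. ad_nilpotent L x"
      "\<And>K. ideal_in L S K \<Longrightarrow> \<forall>x\<in>K. ad_nilpotent L x \<Longrightarrow> K \<subseteq> nil L S"
    by auto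
qed

end

section \<open>Quotients by an ideal\<close>

lemma generated_subalgebra_least: "subalgebra M T \<Longrightarrow> X \<subseteq> T \<Longrightarrow> generated_subalgebra M X \<subseteq> T"
  unfolding generated_subalgebra_def by blast

lemma generated_subalgebra_superset: "X \<subseteq> generated_subalgebra M X"
  unfolding generated_subalgebra_def by blast

context lie_alg
begin

lemma subalgebra_generated:
  assumes "X \<subseteq> carr"
  shows "subalgebra L (generated_subalgebra L X)"
  unfolding subalgebra_def lsubspace_def
proof (intro conjI ballI allI)
  let ?F = "{T. subalgebra L T \<and> X \<subseteq> T}"
  have G: "generated_subalgebra L X = \<Inter>?F"
    unfolding generated_subalgebra_def ..
  show "generated_subalgebra L X \<subseteq> carr"
    using assms subalgebra_carr generated_subalgebra_least by blast
  show "0\<^sub>L \<in> generated_subalgebra L X"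
    unfolding G using subalgebra_lsubspace lsubspace_lzero by blast
  fix a b assume "a \<in> generated_subalgebra L X" "b \<in> generated_subalgebra L X"
  then show "a +\<^sub>L b \<in> generated_subalgebra L X" "[a, b]\<^sub>L \<in> generated_subalgebra L X"
    unfolding G using subalgebra_lsubspace lsubspace_ladd subalgebra_lbr by blast+
next
  fix c a assume "a \<in> generated_subalgebra L X"
  then show "c \<cdot>\<^sub>L a \<in> generated_subalgebra L X"
    unfolding generated_subalgebra_def using subalgebra_lsubspace lsubspace_lsmult by blast
qed

lemma lincomb_closed: "set (map snd xs) \<subseteq> carr \<Longrightarrow> lincomb L xs \<in> carr"
  by (induction xs) auto

lemma lspan_subset: "X \<subseteq> carr \<Longrightarrow> lspan L X \<subseteq> carr"
  unfolding lspan_def using lincomb_closed by blast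

end

locale lie_quotient = lie_alg L for L :: "('f::field, 'a) liealg" +
  fixes I :: "'a set"
  assumes lideal: "lideal L I"
begin

abbreviation Q where "Q \<equiv> quotient L I"
abbreviation cls where "cls \<equiv> coset L I"

lemma quotient_simps:
  "lcarr Q = cls ` carr" "lzero Q = I"
  "ladd Q = (\<lambda>P R. {p +\<^sub>L r | p r. p \<in> P \<and> r \<in> R})"
  "lsmult Q = (\<lambda>c P. {c \<cdot>\<^sub>L p +\<^sub>L i | p i. p \<in> P \<and> i \<in> I})"
  "lbr Q = (\<lambda>P R. {[p, r]\<^sub>L +\<^sub>L i | p r i. p \<in> P \<and> r \<in> R \<and> i \<in> I})"
  by (simp_all add: quotient_def)

lemma ideal_lsubspace: "lsubspace L I"
  using lideal unfolding lideal_def by (rule ideal_in_lsubspace)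

lemma ideal_subset: "I \<subseteq> carr"
  and ideal_lzero: "0\<^sub>L \<in> I"
  and ideal_ladd: "i \<in> I \<Longrightarrow> j \<in> I \<Longrightarrow> i +\<^sub>L j \<in> I"
  and ideal_lsmult: "i \<in> I \<Longrightarrow> c \<cdot>\<^sub>L i \<in> I"
  using ideal_lsubspace lsubspace_subset lsubspace_lzero lsubspace_ladd lsubspace_lsmult by auto

lemma ideal_lbr_left: "y \<in> carr \<Longrightarrow> i \<in> I \<Longrightarrow> [y, i]\<^sub>L \<in> I"
  and ideal_lbr_right: "y \<in> carr \<Longrightarrow> i \<in> I \<Longrightarrow> [i, y]\<^sub>L \<in> I"
  using lideal ideal_in_lbr ideal_in_lbr_right subalgebra_carr unfolding lideal_def by auto

lemma coset_self: "x \<in> carr \<Longrightarrow> x \<in> cls x"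
  unfolding coset_def using ideal_lzero by (force intro!: exI[of _ "0\<^sub>L"])

lemma coset_eqI:
  assumes x: "x \<in> carr" and y: "y \<in> cls x"
  shows "cls y = cls x"
proof -
  obtain i where i: "i \<in> I" "y = x +\<^sub>L i"
    using y unfolding coset_def by blast
  have iC: "i \<in> carr"
    using i ideal_subset by blast
  show ?thesis
  proof
    show "cls y \<subseteq> cls x"
    proof
      fix z assume "z \<in> cls y"
      then obtain j where "j \<in> I" "z = y +\<^sub>L j"
        unfolding coset_def by blast
      moreover from this have "z = x +\<^sub>L (i +\<^sub>L j)"
        using i x iC ideal_subset by (auto simp: ladd_assoc)
      ultimately show "z \<in> cls x"
        unfolding coset_def using ideal_ladd i by blast
    qed
    show "cls x \<subseteq> cls y"
    proof
      fix z assume "z \<in> cls x"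
      then obtain k where k: "k \<in> I" "z = x +\<^sub>L k"
        unfolding coset_def by blast
      then have "z = y +\<^sub>L (-\<^sub>L i +\<^sub>L k)"
        using i x iC ideal_subset by (auto simp: ladd_assoc)
      moreover have "-\<^sub>L i +\<^sub>L k \<in> I"
        using i k ideal_ladd ideal_lsmult by blast
      ultimately show "z \<in> cls y"
        unfolding coset_def by blast
    qed
  qed
qed

lemma coset_lzero: "cls 0\<^sub>L = I"
  unfolding coset_def using ideal_subset by force

lemma coset_eq_ideal_iff: "x \<in> carr \<Longrightarrow> cls x = I \<longleftrightarrow> x \<in> I"
  using coset_self coset_eqI[of "0\<^sub>L" x] coset_lzero by auto

lemma quotient_carrE:
  assumes "X \<in> lcarr Q"
  obtains x where "x \<in> carr" "X = cls x"
  using assms unfolding quotient_simps by blast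

lemma quotient_ladd:
  assumes x: "x \<in> carr" and y: "y \<in> carr"
  shows "ladd Q (cls x) (cls y) = cls (x +\<^sub>L y)"
proof
  show "ladd Q (cls x) (cls y) \<subseteq> cls (x +\<^sub>L y)"
  proof
    fix z assume "z \<in> ladd Q (cls x) (cls y)"
    then obtain i j where ij: "i \<in> I" "j \<in> I" "z = (x +\<^sub>L i) +\<^sub>L (y +\<^sub>L j)"
      unfolding quotient_simps coset_def by blast
    moreover have "i \<in> carr" "j \<in> carr"
      using ij ideal_subset by auto
    ultimately have "z = (x +\<^sub>L y) +\<^sub>L (i +\<^sub>L j)"
      using x y by (simp add: ladd_swap_middle)
    then show "z \<in> cls (x +\<^sub>L y)"
      unfolding coset_def using ij ideal_ladd by blast
  qed
  show "cls (x +\<^sub>L y) \<subseteq> ladd Q (cls x) (cls y)"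
  proof
    fix z assume "z \<in> cls (x +\<^sub>L y)"
    then obtain k where k: "k \<in> I" "z = (x +\<^sub>L y) +\<^sub>L k"
      unfolding coset_def by blast
    then have "z = x +\<^sub>L (y +\<^sub>L k)" "y +\<^sub>L k \<in> cls y"
      using x y ideal_subset by (auto simp: ladd_assoc coset_def)
    then show "z \<in> ladd Q (cls x) (cls y)"
      unfolding quotient_simps using coset_self x by blast
  qed
qed

lemma quotient_lsmult:
  assumes x: "x \<in> carr"
  shows "lsmult Q c (cls x) = cls (c \<cdot>\<^sub>L x)"
proof
  show "lsmult Q c (cls x) \<subseteq> cls (c \<cdot>\<^sub>L x)"
  proof
    fix z assume "z \<in> lsmult Q c (cls x)"
    then obtain i j where ij: "i \<in> I" "j \<in> I" "z = c \<cdot>\<^sub>L (x +\<^sub>L j) +\<^sub>L i"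
      unfolding quotient_simps coset_def by blast
    moreover have "i \<in> carr" "j \<in> carr"
      using ij ideal_subset by auto
    ultimately have "z = c \<cdot>\<^sub>L x +\<^sub>L (c \<cdot>\<^sub>L j +\<^sub>L i)"
      using x by (simp add: lsmult_ladd ladd_assoc)
    then show "z \<in> cls (c \<cdot>\<^sub>L x)"
      unfolding coset_def using ij ideal_ladd ideal_lsmult by blast
  qed
  show "cls (c \<cdot>\<^sub>L x) \<subseteq> lsmult Q c (cls x)"
    unfolding quotient_simps using coset_self x by (force simp: coset_def)
qed

lemma quotient_lbr:
  assumes x: "x \<in> carr" and y: "y \<in> carr"
  shows "lbr Q (cls x) (cls y) = cls [x, y]\<^sub>L"
proof
  show "lbr Q (cls x) (cls y) \<subseteq> cls [x, y]\<^sub>L"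
  proof
    fix z assume "z \<in> lbr Q (cls x) (cls y)"
    then obtain i j k where ijk: "i \<in> I" "j \<in> I" "k \<in> I" "z = [x +\<^sub>L i, y +\<^sub>L j]\<^sub>L +\<^sub>L k"
      unfolding quotient_simps coset_def by blast
    then have C: "i \<in> carr" "j \<in> carr" "k \<in> carr"
      using ideal_subset by auto
    have "z = [x, y]\<^sub>L +\<^sub>L ([i, y]\<^sub>L +\<^sub>L ([x, j]\<^sub>L +\<^sub>L [i, j]\<^sub>L) +\<^sub>L k)"
      using ijk C x y by (simp add: lbr_ladd_left lbr_ladd_right ladd_assoc)
    moreover have "[i, y]\<^sub>L +\<^sub>L ([x, j]\<^sub>L +\<^sub>L [i, j]\<^sub>L) +\<^sub>L k \<in> I"
      using ijk C x y by (simp add: ideal_ladd ideal_lbr_left ideal_lbr_right)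
    ultimately show "z \<in> cls [x, y]\<^sub>L"
      unfolding coset_def by blast
  qed
  show "cls [x, y]\<^sub>L \<subseteq> lbr Q (cls x) (cls y)"
    unfolding quotient_simps using coset_self x y by (force simp: coset_def)
qed

lemma quotient_ad_pow:
  "x \<in> carr \<Longrightarrow> y \<in> carr \<Longrightarrow> (lbr Q (cls x) ^^ n) (cls y) = cls ((ad x ^^ n) y)"
  by (induction n) (auto simp: quotient_lbr)

lemma ad_nilpotent_coset:
  assumes x: "x \<in> carr" and "ad_nilpotent L x"
  shows "ad_nilpotent Q (cls x)"
proof -
  obtain n where "\<forall>y\<in>carr. (ad x ^^ n) y = 0\<^sub>L"
    using assms(2) unfolding ad_nilpotent_def by blast
  then have "\<forall>Y\<in>lcarr Q. (lbr Q (cls x) ^^ n) Y = lzero Q"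
    using x by (auto simp: quotient_simps(1,2) quotient_ad_pow coset_lzero)
  then show ?thesis
    unfolding ad_nilpotent_def by blast
qed

lemma ad_pow_into_ideal_if_ad_nilpotent_coset:
  assumes x: "x \<in> carr" and "ad_nilpotent Q (cls x)"
  obtains n where "\<And>y. y \<in> carr \<Longrightarrow> (ad x ^^ n) y \<in> I"
proof -
  obtain n where "\<forall>Y\<in>cls ` carr. (lbr Q (cls x) ^^ n) Y = I"
    using assms(2) unfolding ad_nilpotent_def quotient_simps(1,2) by blast
  then have "(ad x ^^ n) y \<in> I" if "y \<in> carr" for y
    using that x quotient_ad_pow coset_eq_ideal_iff by auto
  then show ?thesis
    using that by blast
qed

lemma lsubspace_image: "lsubspace L N \<Longrightarrow> lsubspace Q (cls ` N)"
  unfolding lsubspace_def quotient_simps(1,2)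
  using quotient_ladd quotient_lsmult coset_lzero
  by (auto simp: subset_iff)

lemma subalgebra_image: "subalgebra L S \<Longrightarrow> subalgebra Q (cls ` S)"
  unfolding subalgebra_def using lsubspace_image quotient_lbr lsubspace_subset
  by (auto simp: subset_iff)

lemma lsubspace_preimage: "lsubspace Q T \<Longrightarrow> lsubspace L {x \<in> carr. cls x \<in> T}"
  unfolding lsubspace_def using coset_lzero
  by (auto simp: quotient_simps(2) quotient_ladd[symmetric] quotient_lsmult[symmetric])

lemma subalgebra_preimage: "subalgebra Q T \<Longrightarrow> subalgebra L {x \<in> carr. cls x \<in> T}"
  unfolding subalgebra_def using lsubspace_preimage by (auto simp: quotient_lbr[symmetric])

lemma ideal_in_image:
  assumes S: "subalgebra L S" and N: "ideal_in L S N"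
  shows "ideal_in Q (cls ` S) (cls ` N)"
  unfolding ideal_in_def
proof (intro conjI ballI)
  show "lsubspace Q (cls ` N)" "cls ` N \<subseteq> cls ` S"
    using N lsubspace_image ideal_in_lsubspace ideal_in_subset by blast+
  fix X Y assume "X \<in> cls ` S" "Y \<in> cls ` N"
  then show "lbr Q X Y \<in> cls ` N"
    using S N quotient_lbr ideal_in_lbr subalgebra_subset ideal_in_subset
    by (smt (verit, best) image_iff subsetD)
qed

lemma ideal_in_preimage:
  assumes S: "subalgebra L S" and IS: "I \<subseteq> S" and K: "ideal_in Q (cls ` S) K"
  shows "ideal_in L S {x \<in> carr. cls x \<in> K}"
  unfolding ideal_in_def
proof (intro conjI ballI)
  show "lsubspace L {x \<in> carr. cls x \<in> K}"
    using K lsubspace_preimage ideal_in_lsubspace by blast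
  show "{x \<in> carr. cls x \<in> K} \<subseteq> S"
  proof
    fix x assume x: "x \<in> {x \<in> carr. cls x \<in> K}"
    then obtain s where s: "s \<in> S" "cls x = cls s"
      using K ideal_in_subset by blast
    then obtain i where "i \<in> I" "x = s +\<^sub>L i"
      using coset_self x unfolding coset_def by blast
    then show "x \<in> S"
      using s IS S subalgebra_lsubspace lsubspace_ladd by blast
  qed
  fix s x assume s: "s \<in> S" and x: "x \<in> {x \<in> carr. cls x \<in> K}"
  then have "s \<in> carr" "lbr Q (cls s) (cls x) \<in> K"
    using subalgebra_subset[OF S] ideal_in_lbr[OF K, of "cls s" "cls x"] by auto
  with x show "[s, x]\<^sub>L \<in> {x \<in> carr. cls x \<in> K}"
    by (simp add: quotient_lbr)
qed

lemma generated_subalgebra_quotient_subset: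
  assumes "a \<in> carr" "b \<in> carr"
  shows "generated_subalgebra Q {cls a, cls b} \<subseteq> cls ` generated_subalgebra L {a, b}"
  using subalgebra_image[OF subalgebra_generated] generated_subalgebra_superset[of "{a, b}" L] assms
  by (intro generated_subalgebra_least) auto

lemma generated_subalgebra_proper:
  assumes T: "subalgebra Q T" "T \<noteq> lcarr Q"
    and ab: "a \<in> carr" "b \<in> carr" "cls a \<in> T" "cls b \<in> T"
  shows "generated_subalgebra L {a, b} \<noteq> carr"
proof
  assume S_carr: "generated_subalgebra L {a, b} = carr"
  have "generated_subalgebra L {a, b} \<subseteq> {x \<in> carr. cls x \<in> T}"
    using subalgebra_preimage[OF T(1)] ab by (intro generated_subalgebra_least) auto
  then have "lcarr Q \<subseteq> T"
    using S_carr quotient_simps(1) by auto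
  moreover have "T \<subseteq> lcarr Q"
    using T(1) unfolding subalgebra_def lsubspace_def by blast
  ultimately show False
    using T(2) by blast
qed

lemma derived_span_image:
  assumes SC: "S \<subseteq> carr" and TS: "T \<subseteq> cls ` S"
    and X: "X \<in> lspan Q {lbr Q P R | P R. P \<in> T \<and> R \<in> T}"
  obtains x where "x \<in> lspan L {[p, r]\<^sub>L | p r. p \<in> S \<and> r \<in> S}" "X = cls x"
proof -
  let ?D = "{[p, r]\<^sub>L | p r. p \<in> S \<and> r \<in> S}"
  have DC: "?D \<subseteq> carr"
    using SC by (auto simp: subset_iff)
  have lincomb_image: "\<exists>x\<in>lspan L ?D. lincomb Q xs = cls x" if "set (map snd xs) \<subseteq> {lbr Q P R | P R. P \<in> T \<and> R \<in> T}" for xs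
    using that
  proof (induction xs)
    case Nil
    have "lincomb L [] \<in> lspan L ?D"
      unfolding lspan_def by (intro CollectI exI[of _ "[]"]) simp
    then show ?case
      using coset_lzero by (auto simp: quotient_simps)
  next
    case (Cons cV xs)
    obtain c P R where "cV = (c, lbr Q P R)" "P \<in> T" "R \<in> T"
      using Cons.prems by (cases cV) auto
    moreover obtain p r where "P = cls p" "R = cls r" "p \<in> S" "r \<in> S"
      using TS \<open>P \<in> T\<close> \<open>R \<in> T\<close> by blast
    ultimately have cV: "cV = (c, lbr Q (cls p) (cls r))" "p \<in> S" "r \<in> S"
      by simp_all
    obtain x ys where ys: "set (map snd ys) \<subseteq> ?D" "x = lincomb L ys" "lincomb Q xs = cls x"
      using Cons unfolding lspan_def by auto
    have "x \<in> carr" "p \<in> carr" "r \<in> carr"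
      using ys DC lincomb_closed cV SC by blast+
    then have "lincomb Q (cV # xs) = cls (lincomb L ((c, [p, r]\<^sub>L) # ys))"
      using cV ys by (simp add: quotient_lbr quotient_lsmult quotient_ladd)
    moreover have "lincomb L ((c, [p, r]\<^sub>L) # ys) \<in> lspan L ?D"
      unfolding lspan_def using ys cV by (force intro!: exI[of _ "(c, [p, r]\<^sub>L) # ys"])
    ultimately show ?case
      by blast
  qed
  obtain xs where xs: "set (map snd xs) \<subseteq> {lbr Q P R | P R. P \<in> T \<and> R \<in> T}" "X = lincomb Q xs"
    using X unfolding lspan_def by blast
  then show ?thesis
    using lincomb_image[OF xs(1)] that by auto
qed

end

section \<open>The quotient by the Frattini ideal\<close>

sublocale fin_dim_lie_alg \<subseteq> lie_quotient L "frattini L"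
  by unfold_locales (rule lideal_frattini)

context fin_dim_lie_alg
begin

lemma ad_nilpotent_coset_iff: "x \<in> carr \<Longrightarrow> ad_nilpotent Q (cls x) \<longleftrightarrow> ad_nilpotent L x"
  using ad_nilpotent_coset ad_pow_into_ideal_if_ad_nilpotent_coset
    ad_nilpotent_if_ad_pow_into_frattini by metis

theorem nil_quotient_frattini:
  assumes S: "subalgebra L S" and \<Phi>S: "\<Phi> \<subseteq> S"
  shows "nil Q (qimg L \<Phi> S) = qimg L \<Phi> (nil L S)"
  unfolding qimg_def
proof (rule nil_eqI)
  note N = nil_characterization[OF S]
  have NC: "nil L S \<subseteq> carr"
    using N(1) ideal_in_subset subalgebra_subset[OF S] by blast
  show "ideal_in Q (cls ` S) (cls ` nil L S)"
    by (rule ideal_in_image[OF S N(1)])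
  show "\<forall>X\<in>cls ` nil L S. ad_nilpotent Q X"
    using N(2) NC ad_nilpotent_coset by auto
  fix K assume K: "ideal_in Q (cls ` S) K" "\<forall>X\<in>K. ad_nilpotent Q X"
  let ?K = "{x \<in> carr. cls x \<in> K}"
  have "?K \<subseteq> nil L S"
    using N(3)[OF ideal_in_preimage[OF S \<Phi>S K(1)]] K(2) ad_nilpotent_coset_iff by auto
  moreover have "K \<subseteq> cls ` ?K"
  proof
    fix X assume "X \<in> K"
    moreover from this have "X \<in> lcarr Q"
      using K(1) ideal_in_lsubspace unfolding lsubspace_def by blast
    ultimately show "X \<in> cls ` ?K"
      by (auto elim: quotient_carrE)
  qed
  ultimately show "K \<subseteq> cls ` nil L S"
    by blast
qed

theorem triangulable_quotient_frattini:
  assumes hyp: "\<forall>S. subalgebra L S \<and> two_generated L S \<and> S \<noteq> carr \<longrightarrow> triangulable L S"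
    and T: "subalgebra Q T" "two_generated Q T" "T \<noteq> lcarr Q"
  shows "triangulable Q T"
proof -
  obtain A B where AB: "A \<in> lcarr Q" "B \<in> lcarr Q" and T_gen: "T = generated_subalgebra Q {A, B}"
    using T(2) unfolding two_generated_def by blast
  obtain a b where ab: "a \<in> carr" "b \<in> carr" "A = cls a" "B = cls b"
    using AB by (metis quotient_carrE)
  let ?S = "generated_subalgebra L {a, b}"
  have S: "subalgebra L ?S"
    using subalgebra_generated ab by simp
  have SC: "?S \<subseteq> carr"
    using S subalgebra_subset by blast
  have TS: "T \<subseteq> cls ` ?S"
    using generated_subalgebra_quotient_subset[OF ab(1,2)] T_gen ab by simp
  have "?S \<noteq> carr"
    using generated_subalgebra_proper[OF T(1,3) ab(1,2)] generated_subalgebra_superset[of "{A, B}" Q]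
      T_gen ab(3,4) by auto
  moreover have "two_generated L ?S"
    unfolding two_generated_def using ab(1,2) by (intro bexI[of _ a] bexI[of _ b] refl)
  ultimately have tri: "triangulable L ?S"
    using hyp S by blast
  show ?thesis
    unfolding triangulable_def
  proof
    fix X assume "X \<in> lspan Q {lbr Q P R | P R. P \<in> T \<and> R \<in> T}"
    then obtain x where x: "x \<in> lspan L {[p, r]\<^sub>L | p r. p \<in> ?S \<and> r \<in> ?S}" "X = cls x"
      by (rule derived_span_image[OF SC TS])
    moreover have "{[p, r]\<^sub>L | p r. p \<in> ?S \<and> r \<in> ?S} \<subseteq> carr"
      using SC by (auto simp: subset_iff)
    then have "x \<in> carr"
      using x(1) lspan_subset by blast
    ultimately show "ad_nilpotent Q X"
      using tri ad_nilpotent_coset unfolding triangulable_def by blast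
  qed
qed

end

theorem lemma4p5:
  fixes L :: "('f::field, 'a) liealg"
  assumes "lie_algebra L" and "finite_dim L"
  shows "(\<forall>S. subalgebra L S \<and> frattini L \<subseteq> S \<longrightarrow>
            nil (quotient L (frattini L)) (qimg L (frattini L) S)
              = qimg L (frattini L) (nil L S))
       \<and> ((\<forall>S. subalgebra L S \<and> two_generated L S \<and> S \<noteq> lcarr L \<longrightarrow> triangulable L S)
          \<longrightarrow> (\<forall>T. subalgebra (quotient L (frattini L)) T
                   \<and> two_generated (quotient L (frattini L)) T
                   \<and> T \<noteq> lcarr (quotient L (frattini L))
                   \<longrightarrow> triangulable (quotient L (frattini L)) T))"
proof -
  interpret fin_dim_lie_alg L
    by unfold_locales (rule assms)+
  show ?thesis
    using nil_quotient_frattini triangulable_quotient_frattini by blast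
qed

end
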